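(* Let $K$ be a field and let $L$ be a finite modular lattice. Then $L$ is distributive if and only if $H[L]=K[L]/I_L$ admits a combinatorial Koszul filtration.
   Context: $K[L]$ denotes the polynomial ring over $K$ whose variables are the elements of $L$. For incomparable $a,b\in L$, the binomial $ab-(a\vee b)(a\wedge b)$ is called a basic binomial; $I_L$ is the ideal of $K[L]$ generated by all basic binomials, and $H[L]=K[L]/I_L$, standard graded with $\deg(a)=1$ for each $a\in L$. A lattice is modular if $x\le b$ implies $x\vee(a\wedge b)=(x\vee a)\wedge b$ for all $x,a,b$. For a standard graded $K$-algebra $R$ with maximal graded ideal $\mathfrak m$, a collection $\mathcal F$ of ideals of $R$ is a Koszul filtration if: (i) every ideal in $\mathcal F$ is generated by linear forms; (ii) $0$ and $\mathfrak m$ belong to $\mathcal F$; (iii) for every ideal $0\ne I\in\mathcal F$ there exists $J\in\mathcal F$ with $J\subset I$, $I/J$ cyclic, and $J:I\in\mathcal F$. A Koszul filtration of $H[L]$ is called combinatorial if every ideal in it is generated by residue classes $a+I_L$ of some elements $a\in L$ (i.e., of variables). *)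

theory Defs
  imports Main "HOL-Library.Poly_Mapping"
begin

text \<open>The polynomial ring K[L] in the variables a \<in> L (type 'a) over K,
  represented as finitely supported maps from monomials (finitely supported
  exponent vectors) to coefficients.\<close>
type_synonym ('a, 'k) mpoly = "('a \<Rightarrow>\<^sub>0 nat) \<Rightarrow>\<^sub>0 'k"

definition Var :: "'a \<Rightarrow> ('a, 'k::comm_ring_1) mpoly" where
  "Var a = Poly_Mapping.single (Poly_Mapping.single a 1) 1"

definition mdeg :: "('a \<Rightarrow>\<^sub>0 nat) \<Rightarrow> nat" where
  "mdeg m = (\<Sum>v\<in>Poly_Mapping.keys m. Poly_Mapping.lookup m v)"

definition linear_form :: "('a, 'k::comm_ring_1) mpoly \<Rightarrow> bool" where
  "linear_form p \<longleftrightarrow> (\<forall>m\<in>Poly_Mapping.keys p. mdeg m = 1)"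

definition ideal_gen :: "'r::comm_ring_1 set \<Rightarrow> 'r set" where
  "ideal_gen S = {x. \<exists>T c. finite T \<and> T \<subseteq> S \<and> x = (\<Sum>t\<in>T. c t * t)}"

definition colon :: "'r::comm_ring_1 set \<Rightarrow> 'r set \<Rightarrow> 'r set" where
  "colon J I = {r. \<forall>x\<in>I. r * x \<in> J}"

definition basic_binomial :: "'a::lattice \<Rightarrow> 'a \<Rightarrow> ('a, 'k::comm_ring_1) mpoly" where
  "basic_binomial a b = Var a * Var b - Var (sup a b) * Var (inf a b)"

text \<open>The ideal I_L of K[L], L being the whole (finite) lattice type 'a.\<close>
definition I_L :: "('a::lattice, 'k::comm_ring_1) mpoly set" where
  "I_L = ideal_gen {basic_binomial a b | a b. \<not> a \<le> b \<and> \<not> b \<le> a}"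

definition modular_lattice :: "'a::lattice itself \<Rightarrow> bool" where
  "modular_lattice _ \<longleftrightarrow>
     (\<forall>x a b::'a. x \<le> b \<longrightarrow> sup x (inf a b) = inf (sup x a) b)"

text \<open>Ideals of H[L] = K[L]/I_L are represented by their preimages in K[L],
  i.e. ideals of K[L] containing I_L. Under this correspondence: the zero ideal
  is I_L; the maximal graded ideal is I_L + (all variables); an ideal of H[L]
  generated by linear forms is I_L + (V) for a set V of linear forms; I/J cyclic
  means I = J + (f) for some f; and the colon ideal J:I in H[L] corresponds to
  the colon J':I' in K[L].\<close>
definition koszul_filtration_H :: "('a::lattice, 'k::field) mpoly set set \<Rightarrow> bool" where
  "koszul_filtration_H F \<longleftrightarrow>
     (\<forall>I\<in>F. \<exists>V. (\<forall>v\<in>V. linear_form v) \<and> I = ideal_gen (I_L \<union> V)) \<and>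
     I_L \<in> F \<and>
     ideal_gen (I_L \<union> range Var) \<in> F \<and>
     (\<forall>I\<in>F. I \<noteq> I_L \<longrightarrow>
        (\<exists>J\<in>F. J \<subset> I \<and> (\<exists>f. I = ideal_gen (J \<union> {f})) \<and> colon J I \<in> F))"

definition combinatorial_koszul_filtration_H ::
    "('a::lattice, 'k::field) mpoly set set \<Rightarrow> bool" where
  "combinatorial_koszul_filtration_H F \<longleftrightarrow>
     koszul_filtration_H F \<and>
     (\<forall>I\<in>F. \<exists>S. I = ideal_gen (I_L \<union> Var ` S))"

end

theory Submission
  imports Defs "HOL.Modules"
begin

text \<open>
  Two monomials are congruent modulo \<open>I_L\<close> when they are linked by exchanges
  \<open>x\<^sub>u x\<^sub>v \<leadsto> x\<^bsub>u \<squnion> v\<^esub> x\<^bsub>u \<sqinter> v\<^esub>\<close>, and a polynomial lies in \<open>I_L + (x\<^sub>s | s \<in> S)\<close> iff its coefficients sum to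
  zero over every congruence class none of whose monomials involves a variable of \<open>S\<close>.

  If \<open>L\<close> is distributive, a variable can be cancelled from such congruences: a monomial is congruent
  to a chain, and a chain is determined by how many of its elements lie above each join-prime.
  Hence for a down-set \<open>S\<close> and \<open>a \<notin> S\<close> the colon ideal \<open>(I_L + (x\<^sub>s | s \<in> S)) : x\<^sub>a\<close> is generated by
  \<open>I_L\<close> and the \<open>x\<^sub>t\<close> with \<open>t \<sqinter> a \<in> S\<close>, again a down-set; removing maximal elements of down-sets
  one at a time gives a combinatorial Koszul filtration.

  If \<open>L\<close> is modular but not distributive, it contains a diamond \<open>p < a, b, c < q\<close> in which every
  element strictly between \<open>p\<close> and \<open>q\<close> has two relative complements. In a combinatorial Koszul
  filtration, an ideal \<open>I\<close> with the fewest variables among those having a variable in \<open>[p, q]\<close>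
  covers an ideal \<open>J\<close> with one variable \<open>e \<in> [p, q]\<close> less and none in \<open>[p, q]\<close>. The colon
  \<open>J : I\<close> then contains a variable \<open>x\<^sub>w\<close> with \<open>w \<in> [p, q]\<close>, but \<open>x\<^sub>w x\<^sub>e \<in> J\<close> forces a variable of \<open>J\<close>
  between \<open>w \<sqinter> e\<close> and \<open>w \<squnion> e\<close>.
\<close>

section \<open>Ideals\<close>

interpretation ring_module: module "(*) :: 'r::comm_ring_1 \<Rightarrow> 'r \<Rightarrow> 'r"
  by standard (simp_all add: algebra_simps)

declare ring_module.scale_scale [simp del] \<comment> \<open>it reassociates products against \<open>algebra_simps\<close>\<close>

lemma ideal_gen_eq_span: "ideal_gen S = ring_module.span S"
  unfolding ideal_gen_def ring_module.span_explicit by blast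

lemma ideal_gen_base: "x \<in> S \<Longrightarrow> x \<in> ideal_gen S"
  by (simp add: ideal_gen_eq_span ring_module.span_base)

lemma ideal_gen_mono: "A \<subseteq> B \<Longrightarrow> ideal_gen A \<subseteq> ideal_gen B"
  by (simp add: ideal_gen_eq_span ring_module.span_mono)

lemma ideal_gen_minimal: "A \<subseteq> I \<Longrightarrow> ring_module.subspace I \<Longrightarrow> ideal_gen A \<subseteq> I"
  by (simp add: ideal_gen_eq_span ring_module.span_minimal)

lemma ideal_gen_superset: "S \<subseteq> ideal_gen S"
  using ideal_gen_base by blast

lemma subspace_ideal_gen: "ring_module.subspace (ideal_gen S)"
  by (simp add: ideal_gen_eq_span)

lemma ideal_gen_idem: "ideal_gen (ideal_gen A) = ideal_gen A"
  by (simp add: ideal_gen_eq_span ring_module.span_span)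

lemma ideal_gen_zero: "0 \<in> ideal_gen S"
  by (simp add: ideal_gen_eq_span ring_module.span_zero)

lemma ideal_gen_mult: "x \<in> ideal_gen S \<Longrightarrow> c * x \<in> ideal_gen S"
  by (simp add: ideal_gen_eq_span ring_module.span_scale)

lemma ideal_gen_add: "x \<in> ideal_gen S \<Longrightarrow> y \<in> ideal_gen S \<Longrightarrow> x + y \<in> ideal_gen S"
  by (simp add: ideal_gen_eq_span ring_module.span_add)

lemma ideal_gen_diff: "x \<in> ideal_gen S \<Longrightarrow> y \<in> ideal_gen S \<Longrightarrow> x - y \<in> ideal_gen S"
  by (simp add: ideal_gen_eq_span ring_module.span_diff)

lemma subspace_mult_preimage: "ring_module.subspace {x. r * x \<in> ideal_gen S}"
  unfolding ring_module.subspace_def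
proof (intro conjI ballI allI)
  show "0 \<in> {x. r * x \<in> ideal_gen S}" by (simp add: ideal_gen_zero)
  show "x + y \<in> {x. r * x \<in> ideal_gen S}"
    if "x \<in> {x. r * x \<in> ideal_gen S}" "y \<in> {x. r * x \<in> ideal_gen S}" for x y
    using that ideal_gen_add by (fastforce simp: distrib_left)
  show "c * x \<in> {x. r * x \<in> ideal_gen S}" if "x \<in> {x. r * x \<in> ideal_gen S}" for c x
    using that ideal_gen_mult[of "r * x" _ c] by (metis mem_Collect_eq mult.left_commute)
qed

lemma ideal_gen_insert:
  "x \<in> ideal_gen (insert f S) \<longleftrightarrow> (\<exists>c. x - c * f \<in> ideal_gen S)"
  by (simp add: ideal_gen_eq_span ring_module.span_insert)


section \<open>Monomials\<close>

abbreviation var_exp :: "'a \<Rightarrow> ('a \<Rightarrow>\<^sub>0 nat)" where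
  "var_exp u \<equiv> Poly_Mapping.single u (Suc 0)" \<comment> \<open>\<open>Suc 0\<close>, the simp normal form of \<open>1 :: nat\<close>\<close>

lemma var_exp_eq_iff [simp]: "var_exp u = var_exp v \<longleftrightarrow> u = v"
  by (metis lookup_single_eq lookup_single_not_eq Suc_neq_Zero)

lemma keys_add_nat: "Poly_Mapping.keys (m + n :: 'a \<Rightarrow>\<^sub>0 nat) = Poly_Mapping.keys m \<union> Poly_Mapping.keys n"
  by (auto simp: in_keys_iff lookup_add)

lemma mdeg_add: "mdeg (m + n) = mdeg m + mdeg n"
  unfolding mdeg_def by (rule setsum_keys_plus_distrib) simp_all

lemma var_exp_neq_zero [simp]: "var_exp u \<noteq> 0"
  by (metis lookup_single_eq lookup_zero Suc_neq_Zero)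

lemma mdeg_zero [simp]: "mdeg 0 = 0"
  by (simp add: mdeg_def)

lemma mdeg_var_exp [simp]: "mdeg (var_exp u) = 1"
  by (simp add: mdeg_def)

lemma mdeg_eq_0_iff [simp]: "mdeg m = 0 \<longleftrightarrow> m = 0"
  by (auto simp: mdeg_def in_keys_iff poly_mapping_eqI)

lemma Var_mult_Var: "Var u * Var v = Poly_Mapping.single (var_exp u + var_exp v) 1"
  by (simp add: Var_def mult_single)

lemma single_mult_Var: "Poly_Mapping.single w c * Var u = Poly_Mapping.single (w + var_exp u) c"
  by (simp add: Var_def mult_single)

lemma poly_mapping_sum_single:
  "p = (\<Sum>m\<in>Poly_Mapping.keys p. Poly_Mapping.single m (Poly_Mapping.lookup p m))"
  by (rule poly_mapping_eqI)
     (auto simp: lookup_sum lookup_single when_def in_keys_iff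
           intro!: sum.neutral[symmetric] trans[OF _ sum.remove[of _ k]] split: if_splits)


section \<open>The binomial equivalence of monomials\<close>

lemma equivclp_invariant:
  assumes "\<And>x y. r x y \<Longrightarrow> f x = f y" and "equivclp r x y"
  shows "f x = f y"
  using assms(2) by (induction rule: equivclp_induct) (auto dest: assms(1))

lemma equivclp_map:
  assumes "\<And>x y. r x y \<Longrightarrow> r (g x) (g y)" and "equivclp r x y"
  shows "equivclp r (g x) (g y)"
  using assms(2) by (induction rule: equivclp_induct) (auto intro: equivclp_into_equivclp assms(1))

definition binom_step :: "('a::lattice \<Rightarrow>\<^sub>0 nat) \<Rightarrow> ('a \<Rightarrow>\<^sub>0 nat) \<Rightarrow> bool" where
  "binom_step m m' \<longleftrightarrow> (\<exists>w u v. \<not> u \<le> v \<and> \<not> v \<le> u \<and>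
     m = w + var_exp u + var_exp v \<and> m' = w + var_exp (sup u v) + var_exp (inf u v))"

abbreviation binom_equiv :: "('a::lattice \<Rightarrow>\<^sub>0 nat) \<Rightarrow> ('a \<Rightarrow>\<^sub>0 nat) \<Rightarrow> bool" where
  "binom_equiv \<equiv> equivclp binom_step"

lemma binom_equiv_pair: "binom_equiv (var_exp u + var_exp v) (var_exp (inf u v) + var_exp (sup u v))"
proof (cases "u \<le> v \<or> v \<le> u")
  case True
  then show ?thesis by (auto simp: inf_absorb1 inf_absorb2 sup_absorb1 sup_absorb2 add.commute)
next
  case False
  then have "binom_step (0 + var_exp u + var_exp v) (0 + var_exp (sup u v) + var_exp (inf u v))"
    unfolding binom_step_def by blast
  then show ?thesis by (auto simp: add.commute)
qed

lemma binom_step_add_left: "binom_step m m' \<Longrightarrow> binom_step (w + m) (w + m')"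
proof -
  assume "binom_step m m'"
  then obtain w' u v where "\<not> u \<le> v" "\<not> v \<le> u"
    "m = w' + var_exp u + var_exp v" "m' = w' + var_exp (sup u v) + var_exp (inf u v)"
    unfolding binom_step_def by blast
  then show ?thesis
    unfolding binom_step_def by (intro exI[of _ "w + w'"] exI[of _ u] exI[of _ v]) (simp add: add.assoc)
qed

lemma binom_equiv_add_left: "binom_equiv m m' \<Longrightarrow> binom_equiv (w + m) (w + m')"
  by (erule equivclp_map[rotated]) (rule binom_step_add_left)

lemma binom_equiv_add_right: "binom_equiv m m' \<Longrightarrow> binom_equiv (m + w) (m' + w)"
  using binom_equiv_add_left[of m m' w] by (simp add: add.commute)

lemma binom_equiv_mdeg: "binom_equiv m m' \<Longrightarrow> mdeg m = mdeg m'"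
  by (erule equivclp_invariant[rotated]) (auto simp: binom_step_def mdeg_add)

lemma binom_equiv_mdeg_le_1:
  assumes "mdeg m \<le> 1"
  shows "binom_equiv m n \<longleftrightarrow> n = m"
proof
  have no_step: "2 \<le> mdeg m \<and> 2 \<le> mdeg m'" if "binom_step m m'" for m m' :: "'a \<Rightarrow>\<^sub>0 nat"
    using that by (auto simp: binom_step_def mdeg_add)
  assume "binom_equiv m n"
  then show "n = m"
  proof (induction rule: equivclp_induct)
    case (step y z)
    with no_step assms show ?case by force
  qed simp
qed simp

lemma Inf_fin_insert_sup_inf:
  fixes u v :: "'a::lattice"
  assumes "finite A"
  shows "Inf_fin (insert (sup u v) (insert (inf u v) A)) = Inf_fin (insert u (insert v A))"
proof -
  have "inf (sup u v) (inf (inf u v) x) = inf u (inf v x)" for x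
    by (simp add: inf.absorb2 le_infI1 le_supI1 flip: inf_assoc)
  with assms show ?thesis
    by (cases "A = {}") (simp_all add: inf.absorb2 le_supI1)
qed

lemma Sup_fin_insert_sup_inf:
  fixes u v :: "'a::lattice"
  assumes "finite A"
  shows "Sup_fin (insert (sup u v) (insert (inf u v) A)) = Sup_fin (insert u (insert v A))"
proof -
  have "sup (sup u v) (sup (inf u v) x) = sup u (sup v x)" for x
    by (simp add: sup.absorb1 le_supI1 le_infI1 flip: sup_assoc)
  with assms show ?thesis
    by (cases "A = {}") (simp_all add: sup.absorb1 le_infI1)
qed

lemma keys_add_var_exp_var_exp:
  "Poly_Mapping.keys (w + var_exp u + var_exp v) = insert u (insert v (Poly_Mapping.keys w))"
  by (auto simp: keys_add_nat)

lemma binom_equiv_Inf_fin_keys: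
  "binom_equiv m m' \<Longrightarrow> Inf_fin (Poly_Mapping.keys m) = Inf_fin (Poly_Mapping.keys m')"
proof (erule equivclp_invariant[rotated])
  fix m m' :: "'a \<Rightarrow>\<^sub>0 nat"
  assume "binom_step m m'"
  then show "Inf_fin (Poly_Mapping.keys m) = Inf_fin (Poly_Mapping.keys m')"
    unfolding binom_step_def
    by (auto simp only: keys_add_var_exp_var_exp Inf_fin_insert_sup_inf finite_keys)
qed

lemma binom_equiv_Sup_fin_keys:
  "binom_equiv m m' \<Longrightarrow> Sup_fin (Poly_Mapping.keys m) = Sup_fin (Poly_Mapping.keys m')"
proof (erule equivclp_invariant[rotated])
  fix m m' :: "'a \<Rightarrow>\<^sub>0 nat"
  assume "binom_step m m'"
  then show "Sup_fin (Poly_Mapping.keys m) = Sup_fin (Poly_Mapping.keys m')"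
    unfolding binom_step_def
    by (auto simp only: keys_add_var_exp_var_exp Sup_fin_insert_sup_inf finite_keys)
qed

lemma basic_binomial_mem_I_L: "\<not> u \<le> v \<Longrightarrow> \<not> v \<le> u \<Longrightarrow> basic_binomial u v \<in> I_L"
  unfolding I_L_def by (blast intro: ideal_gen_base)

lemma binom_step_diff_mem_I_L:
  assumes "binom_step m m'"
  shows "Poly_Mapping.single m 1 - Poly_Mapping.single m' 1 \<in> (I_L :: ('a::lattice, 'k::comm_ring_1) mpoly set)"
proof -
  from assms obtain w u v where "\<not> u \<le> v" "\<not> v \<le> u"
    and m: "m = w + var_exp u + var_exp v" "m' = w + var_exp (sup u v) + var_exp (inf u v)"
    unfolding binom_step_def by blast
  then have "Poly_Mapping.single w 1 * basic_binomial u v \<in> (I_L :: ('a, 'k) mpoly set)"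
    unfolding I_L_def by (intro ideal_gen_mult basic_binomial_mem_I_L[unfolded I_L_def])
  then show ?thesis
    by (simp add: m basic_binomial_def right_diff_distrib Var_mult_Var mult_single add.assoc)
qed

lemma binom_equiv_diff_mem_I_L:
  "binom_equiv m m' \<Longrightarrow> Poly_Mapping.single m 1 - Poly_Mapping.single m' 1 \<in> (I_L :: ('a::lattice, 'k::comm_ring_1) mpoly set)"
proof (induction rule: equivclp_induct)
  case base
  show ?case by (simp add: I_L_def ideal_gen_zero)
next
  case (step m' m'')
  let ?d = "\<lambda>x y. Poly_Mapping.single x 1 - Poly_Mapping.single y 1 :: ('a, 'k) mpoly"
  have "?d m' m'' \<in> I_L"
    using step.hyps(2)
  proof
    assume "binom_step m'' m'"
    then have "- 1 * ?d m'' m' \<in> I_L"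
      unfolding I_L_def by (intro ideal_gen_mult binom_step_diff_mem_I_L[unfolded I_L_def])
    then show ?thesis by simp
  qed (rule binom_step_diff_mem_I_L)
  with step.IH have "?d m m' + ?d m' m'' \<in> I_L"
    unfolding I_L_def by (rule ideal_gen_add)
  then show ?case by simp
qed


section \<open>A membership criterion for ideals generated by variables\<close>

abbreviation var_ideal :: "'a::lattice set \<Rightarrow> ('a, 'k::comm_ring_1) mpoly set" where
  "var_ideal S \<equiv> ideal_gen (I_L \<union> Var ` S)"

lemma I_L_subset_var_ideal: "I_L \<subseteq> var_ideal S"
  using ideal_gen_superset by blast

lemma I_L_mem_var_ideal: "x \<in> I_L \<Longrightarrow> x \<in> var_ideal S"
  using I_L_subset_var_ideal by blast

lemma Var_mem_var_ideal: "s \<in> S \<Longrightarrow> Var s \<in> var_ideal S"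
  by (simp add: ideal_gen_base)

lemma var_ideal_mono: "S \<subseteq> S' \<Longrightarrow> var_ideal S \<subseteq> var_ideal S'"
  by (intro ideal_gen_mono Un_mono image_mono order_refl)

lemma ideal_gen_I_L [simp]: "ideal_gen I_L = I_L"
  by (simp add: I_L_def ideal_gen_idem)

lemma var_ideal_empty: "var_ideal {} = I_L"
  by simp

definition coeff_sum :: "('a \<Rightarrow>\<^sub>0 nat) set \<Rightarrow> ('a, 'k::comm_ring_1) mpoly \<Rightarrow> 'k" where
  "coeff_sum C p = (\<Sum>m\<in>Poly_Mapping.keys p. if m \<in> C then Poly_Mapping.lookup p m else 0)"

lemma coeff_sum_add: "coeff_sum C (p + q) = coeff_sum C p + coeff_sum C q"
  unfolding coeff_sum_def by (rule setsum_keys_plus_distrib) simp_all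

lemma coeff_sum_zero [simp]: "coeff_sum C 0 = 0"
  by (simp add: coeff_sum_def)

lemma coeff_sum_uminus: "coeff_sum C (- p) = - coeff_sum C p"
  unfolding coeff_sum_def by (simp flip: sum_negf) (rule sum.cong; simp)

lemma coeff_sum_diff: "coeff_sum C (p - q) = coeff_sum C p - coeff_sum C q"
  using coeff_sum_add[of C p "- q"] by (simp add: coeff_sum_uminus)

lemma coeff_sum_sum: "coeff_sum C (sum f A) = (\<Sum>i\<in>A. coeff_sum C (f i))"
  by (induction A rule: infinite_finite_induct) (simp_all add: coeff_sum_add)

lemma coeff_sum_single: "coeff_sum C (Poly_Mapping.single m c) = (if m \<in> C then c else 0)"
  by (simp add: coeff_sum_def)

lemma coeff_sum_singleton: "coeff_sum {m} p = Poly_Mapping.lookup p m"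
  by (cases "m \<in> Poly_Mapping.keys p") (simp_all add: coeff_sum_def sum.delta in_keys_iff)

definition kernel_ideal :: "('a \<Rightarrow>\<^sub>0 nat) set \<Rightarrow> ('a, 'k::comm_ring_1) mpoly set" where
  "kernel_ideal C = {x. \<forall>c. coeff_sum C (c * x) = 0}"

lemma subspace_kernel_ideal: "ring_module.subspace (kernel_ideal C)"
  unfolding ring_module.subspace_def kernel_ideal_def
  by (auto simp: distrib_left coeff_sum_add simp flip: mult.assoc)

lemma mem_kernel_ideal:
  assumes "\<And>w c. coeff_sum C (Poly_Mapping.single w c * x) = 0"
  shows "x \<in> kernel_ideal C"
proof -
  have "coeff_sum C (c * x) = 0" for c
  proof -
    have "c * x = (\<Sum>w\<in>Poly_Mapping.keys c. Poly_Mapping.single w (Poly_Mapping.lookup c w) * x)"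
      by (subst poly_mapping_sum_single[of c]) (simp add: sum_distrib_right)
    then show ?thesis by (simp add: coeff_sum_sum assms)
  qed
  then show ?thesis by (simp add: kernel_ideal_def)
qed

definition binom_class :: "('a::lattice \<Rightarrow>\<^sub>0 nat) \<Rightarrow> ('a \<Rightarrow>\<^sub>0 nat) set" where
  "binom_class m = {n. binom_equiv m n}"

definition class_avoids :: "'a::lattice set \<Rightarrow> ('a \<Rightarrow>\<^sub>0 nat) \<Rightarrow> bool" where
  "class_avoids S m \<longleftrightarrow> (\<forall>n. binom_equiv m n \<longrightarrow> Poly_Mapping.keys n \<inter> S = {})"

lemma var_ideal_subset_kernel_ideal:
  assumes "class_avoids S m"
  shows "var_ideal S \<subseteq> kernel_ideal (binom_class m)"
proof (intro ideal_gen_minimal subspace_kernel_ideal Un_least)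
  have "basic_binomial u v \<in> kernel_ideal (binom_class m)" if "\<not> u \<le> v" "\<not> v \<le> u" for u v
  proof (rule mem_kernel_ideal)
    fix w c
    have "binom_step (w + var_exp u + var_exp v) (w + var_exp (sup u v) + var_exp (inf u v))"
      using that unfolding binom_step_def by blast
    then have "w + var_exp u + var_exp v \<in> binom_class m \<longleftrightarrow>
               w + var_exp (sup u v) + var_exp (inf u v) \<in> binom_class m"
      unfolding binom_class_def by (blast intro: equivclp_trans equivclp_sym)
    then show "coeff_sum (binom_class m) (Poly_Mapping.single w c * basic_binomial u v) = 0"
      by (simp add: basic_binomial_def right_diff_distrib Var_mult_Var mult_single add.assoc
          coeff_sum_diff coeff_sum_single)
  qed
  then show "I_L \<subseteq> kernel_ideal (binom_class m)"
    unfolding I_L_def by (intro ideal_gen_minimal subspace_kernel_ideal) blast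
  show "Var ` S \<subseteq> kernel_ideal (binom_class m)"
  proof (intro image_subsetI mem_kernel_ideal)
    fix s w c assume "s \<in> S"
    with assms have "w + var_exp s \<notin> binom_class m"
      by (auto simp: class_avoids_def binom_class_def keys_add_nat)
    then show "coeff_sum (binom_class m) (Poly_Mapping.single w c * Var s) = 0"
      by (simp add: single_mult_Var coeff_sum_single)
  qed
qed


lemma coeff_sum_binom_class_eq_0:
  "class_avoids S m \<Longrightarrow> r \<in> var_ideal S \<Longrightarrow> coeff_sum (binom_class m) r = 0"
  using var_ideal_subset_kernel_ideal[of S m] by (auto simp: kernel_ideal_def dest!: spec[of _ 1])

lemma single_mem_var_ideal:
  assumes "\<not> class_avoids S w"
  shows "Poly_Mapping.single w c \<in> var_ideal S"
proof -
  from assms obtain n s where "binom_equiv w n" "s \<in> Poly_Mapping.keys n" "s \<in> S"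
    unfolding class_avoids_def by blast
  have "n = (n - var_exp s) + var_exp s"
    using \<open>s \<in> Poly_Mapping.keys n\<close>
    by (intro poly_mapping_eqI) (auto simp: lookup_add lookup_minus lookup_single in_keys_iff when_def)
  then have "Poly_Mapping.single n 1 = Poly_Mapping.single (n - var_exp s) 1 * Var s"
    by (metis single_mult_Var)
  also have "\<dots> \<in> var_ideal S"
    using Var_mem_var_ideal[OF \<open>s \<in> S\<close>] by (rule ideal_gen_mult)
  finally have "Poly_Mapping.single n 1 \<in> var_ideal S" .
  moreover have "Poly_Mapping.single w 1 - Poly_Mapping.single n 1 \<in> var_ideal S"
    using binom_equiv_diff_mem_I_L[OF \<open>binom_equiv w n\<close>] I_L_subset_var_ideal by blast
  ultimately have "Poly_Mapping.single 0 c * (Poly_Mapping.single w 1 - Poly_Mapping.single n 1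
                   + Poly_Mapping.single n 1) \<in> var_ideal S"
    by (intro ideal_gen_mult ideal_gen_add)
  then show ?thesis by (simp add: mult_single)
qed

text \<open>A monomial whose class meets a variable of \<open>S\<close> lies in the ideal; a monomial of an
  avoiding class can be traded for another monomial of \<open>r\<close> in the same class.\<close>

lemma var_ideal_reduction_step:
  assumes w: "w \<in> Poly_Mapping.keys r"
    and r: "\<And>m. class_avoids S m \<Longrightarrow> coeff_sum (binom_class m) r = 0"
  obtains d where "d \<in> var_ideal S" "Poly_Mapping.keys (r - d) \<subseteq> Poly_Mapping.keys r - {w}"
    "\<forall>m. class_avoids S m \<longrightarrow> coeff_sum (binom_class m) d = 0"
proof (cases "class_avoids S w")
  let ?c = "Poly_Mapping.lookup r w"
  case False
  have "w \<notin> binom_class m" if "class_avoids S m" for m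
    using that False by (auto simp: class_avoids_def binom_class_def intro: equivclp_trans)
  then show ?thesis
    by (intro that[of "Poly_Mapping.single w ?c"] single_mem_var_ideal[OF False])
       (auto simp: coeff_sum_single in_keys_iff lookup_minus lookup_single when_def split: if_splits)
next
  let ?c = "Poly_Mapping.lookup r w"
  case True
  have "\<exists>w'. w' \<noteq> w \<and> w' \<in> Poly_Mapping.keys r \<and> binom_equiv w w'"
  proof (rule ccontr)
    assume "\<not> ?thesis"
    then have "coeff_sum (binom_class w) r = ?c"
      unfolding coeff_sum_def using w
      by (subst sum.remove[OF finite_keys w]) (auto simp: binom_class_def intro!: sum.neutral)
    then show False using r[OF True] w by (simp add: in_keys_iff)
  qed
  then obtain w' where w': "w' \<noteq> w" "w' \<in> Poly_Mapping.keys r" "binom_equiv w w'" by blast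
  let ?d = "Poly_Mapping.single 0 ?c * (Poly_Mapping.single w 1 - Poly_Mapping.single w' 1)"
  have "?d \<in> var_ideal S"
    using binom_equiv_diff_mem_I_L[OF w'(3)] by (intro ideal_gen_mult I_L_mem_var_ideal)
  moreover have "w \<in> binom_class m \<longleftrightarrow> w' \<in> binom_class m" for m
    using w'(3) unfolding binom_class_def by (blast intro: equivclp_trans equivclp_sym)
  ultimately show ?thesis
    using w'(1,2)
    by (intro that[of ?d])
       (auto simp: mult_single right_diff_distrib coeff_sum_diff coeff_sum_single in_keys_iff
          lookup_minus lookup_single when_def split: if_splits)
qed

lemma mem_var_ideal_if_coeff_sums_vanish:
  assumes "\<And>m. class_avoids S m \<Longrightarrow> coeff_sum (binom_class m) r = 0"
  shows "r \<in> var_ideal S"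
  using assms
proof (induction "card (Poly_Mapping.keys r)" arbitrary: r rule: less_induct)
  case less
  show ?case
  proof (cases "r = 0")
    case True
    then show ?thesis by (simp add: ideal_gen_zero)
  next
    case False
    then obtain w where w: "w \<in> Poly_Mapping.keys r" by fastforce
    from w less.prems obtain d where d: "d \<in> var_ideal S"
      and keys_d: "Poly_Mapping.keys (r - d) \<subseteq> Poly_Mapping.keys r - {w}"
      and coeff_d: "\<forall>m. class_avoids S m \<longrightarrow> coeff_sum (binom_class m) d = 0"
      by (rule var_ideal_reduction_step)
    have "card (Poly_Mapping.keys (r - d)) < card (Poly_Mapping.keys r)"
      using keys_d w by (meson card_Diff1_less finite_keys card_mono le_less_trans finite_Diff)
    moreover have "coeff_sum (binom_class m) (r - d) = 0" if "class_avoids S m" for m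
      using less.prems[OF that] coeff_d that by (simp add: coeff_sum_diff)
    ultimately have "r - d \<in> var_ideal S" by (rule less.hyps)
    from ideal_gen_add[OF this d] show ?thesis by simp
  qed
qed

theorem mem_var_ideal_iff:
  "r \<in> var_ideal S \<longleftrightarrow> (\<forall>m. class_avoids S m \<longrightarrow> coeff_sum (binom_class m) r = 0)"
  using coeff_sum_binom_class_eq_0 mem_var_ideal_if_coeff_sums_vanish by blast


lemma binom_class_mdeg_le_1: "mdeg m \<le> 1 \<Longrightarrow> binom_class m = {m}"
  by (auto simp: binom_class_def binom_equiv_mdeg_le_1)

lemma lookup_var_ideal_eq_0:
  assumes "r \<in> var_ideal S" "mdeg m \<le> 1" "Poly_Mapping.keys m \<inter> S = {}"
  shows "Poly_Mapping.lookup r m = 0"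
proof -
  have "class_avoids S m"
    using assms(2,3) by (simp add: class_avoids_def binom_equiv_mdeg_le_1)
  with assms(1) show ?thesis
    using coeff_sum_binom_class_eq_0 binom_class_mdeg_le_1[OF assms(2)] by (metis coeff_sum_singleton)
qed

lemma Var_mem_var_ideal_iff: "Var u \<in> var_ideal S \<longleftrightarrow> u \<in> S"
  using lookup_var_ideal_eq_0[of "Var u" S "var_exp u"] Var_mem_var_ideal[of u S]
  by (auto simp: Var_def)

lemma var_ideal_inj: "var_ideal S = var_ideal S' \<Longrightarrow> S = S'"
  by (metis Var_mem_var_ideal_iff subsetI subset_antisym)

lemma var_ideal_interval:
  assumes "r \<in> var_ideal S" "coeff_sum (binom_class m) r \<noteq> 0"
  shows "\<exists>w\<in>S. Inf_fin (Poly_Mapping.keys m) \<le> w \<and> w \<le> Sup_fin (Poly_Mapping.keys m)"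
proof (rule ccontr)
  assume none: "\<not> ?thesis"
  have "class_avoids S m"
    unfolding class_avoids_def
  proof (intro allI impI)
    fix n assume "binom_equiv m n"
    then have "Inf_fin (Poly_Mapping.keys n) = Inf_fin (Poly_Mapping.keys m)"
      "Sup_fin (Poly_Mapping.keys n) = Sup_fin (Poly_Mapping.keys m)"
      by (simp_all add: binom_equiv_Inf_fin_keys binom_equiv_Sup_fin_keys)
    moreover have "Inf_fin (Poly_Mapping.keys n) \<le> s" "s \<le> Sup_fin (Poly_Mapping.keys n)"
      if "s \<in> Poly_Mapping.keys n" for s
      using that by (simp_all add: Inf_fin.coboundedI Sup_fin.coboundedI)
    ultimately show "Poly_Mapping.keys n \<inter> S = {}"
      using none by auto
  qed
  with assms show False by (simp add: coeff_sum_binom_class_eq_0)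
qed

lemma binom_equiv_pair_iff:
  "binom_equiv (var_exp s + var_exp t) (var_exp s' + var_exp t') \<longleftrightarrow>
     inf s t = inf s' t' \<and> sup s t = sup s' t'"
proof
  assume "binom_equiv (var_exp s + var_exp t) (var_exp s' + var_exp t')"
  from binom_equiv_Inf_fin_keys[OF this] binom_equiv_Sup_fin_keys[OF this]
  show "inf s t = inf s' t' \<and> sup s t = sup s' t'"
    by (simp add: keys_add_nat inf_commute sup_commute)
next
  assume "inf s t = inf s' t' \<and> sup s t = sup s' t'"
  then show "binom_equiv (var_exp s + var_exp t) (var_exp s' + var_exp t')"
    using binom_equiv_pair[of s t] binom_equiv_pair[of s' t'] by (metis equivclp_sym equivclp_trans)
qed

lemma Var_mult_Var_mem_var_ideal:
  assumes "Var s * Var t \<in> var_ideal S"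
  shows "\<exists>w\<in>S. inf s t \<le> w \<and> w \<le> sup s t"
  using var_ideal_interval[OF assms, of "var_exp s + var_exp t"]
  by (simp add: Var_mult_Var coeff_sum_single binom_class_def keys_add_nat inf_commute sup_commute)

lemma Var_mult_Var_diff_mem_var_ideal:
  assumes "Var s * Var t - Var s' * Var t' \<in> var_ideal S"
    and "\<not> (inf s' t' = inf s t \<and> sup s' t' = sup s t)"
  shows "\<exists>w\<in>S. inf s t \<le> w \<and> w \<le> sup s t"
  using var_ideal_interval[OF assms(1), of "var_exp s + var_exp t"] assms(2)
  by (auto simp: Var_mult_Var coeff_sum_diff coeff_sum_single binom_class_def binom_equiv_pair_iff
        keys_add_nat inf_commute sup_commute)

lemma Var_diff_mem_var_ideal:
  assumes "Var u - Var v \<in> var_ideal S" "u \<noteq> v"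
  shows "u \<in> S"
  using lookup_var_ideal_eq_0[OF assms(1), of "var_exp u"] assms(2)
  by (auto simp: Var_def lookup_minus lookup_single when_def)


section \<open>Linear parts and colon ideals\<close>

lemma add_eq_var_exp_iff:
  "w + k = var_exp u \<longleftrightarrow> (w = 0 \<and> k = var_exp u) \<or> (w = var_exp u \<and> k = 0)"
proof
  assume wk: "w + k = var_exp u"
  then have "mdeg w + mdeg k = 1" by (metis mdeg_add mdeg_var_exp)
  then have "mdeg w = 0 \<or> mdeg k = 0" by arith
  then have "w = 0 \<or> k = 0" by simp
  with wk show "(w = 0 \<and> k = var_exp u) \<or> (w = var_exp u \<and> k = 0)" by auto
qed auto

lemma lookup_single_mult_var_exp:
  "Poly_Mapping.lookup (Poly_Mapping.single w a * f) (var_exp u) =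
     Poly_Mapping.lookup (Poly_Mapping.single w a) 0 * Poly_Mapping.lookup f (var_exp u) +
     Poly_Mapping.lookup (Poly_Mapping.single w a) (var_exp u) * Poly_Mapping.lookup f 0"
proof -
  have "Poly_Mapping.single w a * f =
        (\<Sum>k\<in>Poly_Mapping.keys f. Poly_Mapping.single (w + k) (a * Poly_Mapping.lookup f k))"
    by (subst poly_mapping_sum_single[of f]) (simp add: sum_distrib_left mult_single)
  then have "Poly_Mapping.lookup (Poly_Mapping.single w a * f) (var_exp u) =
        (\<Sum>k\<in>Poly_Mapping.keys f. if w + k = var_exp u then a * Poly_Mapping.lookup f k else 0)"
    by (simp add: lookup_sum lookup_single when_def eq_commute[of _ "w + _"])
  then show ?thesis
    by (auto simp: add_eq_var_exp_iff lookup_single when_def sum.delta in_keys_iff)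
qed

lemma lookup_mult_var_exp:
  "Poly_Mapping.lookup (c * f) (var_exp u) =
     Poly_Mapping.lookup c 0 * Poly_Mapping.lookup f (var_exp u) +
     Poly_Mapping.lookup c (var_exp u) * Poly_Mapping.lookup f 0"
proof -
  let ?c = "\<lambda>w. Poly_Mapping.single w (Poly_Mapping.lookup c w)"
  have c: "c = (\<Sum>w\<in>Poly_Mapping.keys c. ?c w)" by (rule poly_mapping_sum_single)
  have "Poly_Mapping.lookup (c * f) (var_exp u) =
        (\<Sum>w\<in>Poly_Mapping.keys c. Poly_Mapping.lookup (?c w * f) (var_exp u))"
    by (subst c) (simp add: sum_distrib_right lookup_sum)
  also have "\<dots> = (\<Sum>w\<in>Poly_Mapping.keys c.
      Poly_Mapping.lookup (?c w) 0 * Poly_Mapping.lookup f (var_exp u) +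
      Poly_Mapping.lookup (?c w) (var_exp u) * Poly_Mapping.lookup f 0)"
    by (simp only: lookup_single_mult_var_exp)
  also have "\<dots> = Poly_Mapping.lookup c 0 * Poly_Mapping.lookup f (var_exp u) +
                  Poly_Mapping.lookup c (var_exp u) * Poly_Mapping.lookup f 0"
    by (subst (3 4) c) (simp add: lookup_sum sum.distrib sum_distrib_right)
  finally show ?thesis .
qed

lemma ideal_gen_insert_var_ideal_linear_part:
  assumes "g \<in> ideal_gen (var_ideal S \<union> {f})" "Poly_Mapping.lookup f 0 = 0"
  shows "\<exists>l. \<forall>u. u \<notin> S \<longrightarrow> Poly_Mapping.lookup g (var_exp u) = l * Poly_Mapping.lookup f (var_exp u)"
proof -
  from assms(1) obtain c where "g - c * f \<in> var_ideal S"
    by (auto simp: ideal_gen_insert ideal_gen_idem)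
  then have "Poly_Mapping.lookup (g - c * f) (var_exp u) = 0" if "u \<notin> S" for u
    using that by (intro lookup_var_ideal_eq_0) auto
  then show ?thesis
    using assms(2) by (intro exI[of _ "Poly_Mapping.lookup c 0"]) (simp add: lookup_minus lookup_mult_var_exp)
qed

text \<open>Outside \<open>S\<close>, the linear parts of all elements of the extension are multiples of that of \<open>f\<close>,
  so it cannot contain two new variables.\<close>

lemma var_ideal_cyclic_extension:
  fixes f :: "('a::lattice, 'k::idom) mpoly"
  assumes ext: "var_ideal S' = ideal_gen (var_ideal S \<union> {f})"
    and "S \<subseteq> S'" "e \<in> S'" "e \<notin> S"
  shows "S' = insert e S"
proof -
  have "f \<in> var_ideal S'" by (simp add: ext ideal_gen_base)
  then have f0: "Poly_Mapping.lookup f 0 = 0" by (rule lookup_var_ideal_eq_0) simp_all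
  have Var_ext: "Var x \<in> ideal_gen (var_ideal S \<union> {f})" if "x \<in> S'" for x
    unfolding ext[symmetric] using that by (rule Var_mem_var_ideal)
  have linear: "\<exists>l. \<forall>u. u \<notin> S \<longrightarrow>
      Poly_Mapping.lookup (Var x) (var_exp u) = l * Poly_Mapping.lookup f (var_exp u)" if "x \<in> S'" for x
    using Var_ext[OF that] f0 by (rule ideal_gen_insert_var_ideal_linear_part)
  have "t = e" if "t \<in> S'" "t \<notin> S" for t
  proof (rule ccontr)
    assume "t \<noteq> e"
    obtain l1 l2 where
      l1: "\<forall>u. u \<notin> S \<longrightarrow> Poly_Mapping.lookup (Var e) (var_exp u) = l1 * Poly_Mapping.lookup f (var_exp u)" and
      l2: "\<forall>u. u \<notin> S \<longrightarrow> Poly_Mapping.lookup (Var t) (var_exp u) = l2 * Poly_Mapping.lookup f (var_exp u)"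
      using linear \<open>e \<in> S'\<close> \<open>t \<in> S'\<close> by blast
    have "l1 * Poly_Mapping.lookup f (var_exp e) = 1" "l1 * Poly_Mapping.lookup f (var_exp t) = 0"
      "l2 * Poly_Mapping.lookup f (var_exp t) = 1"
      using l1[rule_format, OF \<open>e \<notin> S\<close>] l1[rule_format, OF \<open>t \<notin> S\<close>] l2[rule_format, OF \<open>t \<notin> S\<close>]
        \<open>t \<noteq> e\<close>
      by (simp_all add: Var_def lookup_single when_def)
    then show False by (metis mult_eq_0_iff zero_neq_one)
  qed
  with assms(2-4) show ?thesis by blast
qed

lemma var_ideal_insert: "var_ideal (insert a S) = ideal_gen (var_ideal S \<union> {Var a})"
proof (rule subset_antisym)
  have "I_L \<union> Var ` insert a S \<subseteq> var_ideal S \<union> {Var a}"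
    using I_L_subset_var_ideal Var_mem_var_ideal by blast
  then show "var_ideal (insert a S) \<subseteq> ideal_gen (var_ideal S \<union> {Var a})"
    by (intro ideal_gen_minimal subspace_ideal_gen) (use ideal_gen_superset in blast)
  show "ideal_gen (var_ideal S \<union> {Var a}) \<subseteq> var_ideal (insert a S)"
    using var_ideal_mono[of S "insert a S"] Var_mem_var_ideal[of a "insert a S"]
    by (intro ideal_gen_minimal subspace_ideal_gen) blast
qed

lemma colon_var_ideal_insert:
  "colon (var_ideal S) (var_ideal (insert e S)) = {r. r * Var e \<in> var_ideal S}"
proof (intro subset_antisym subsetI CollectI)
  fix r assume "r \<in> colon (var_ideal S) (var_ideal (insert e S))"
  then show "r * Var e \<in> var_ideal S"
    using Var_mem_var_ideal[of e "insert e S"] unfolding colon_def by blast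
next
  fix r assume "r \<in> {r. r * Var e \<in> var_ideal S}"
  then have "I_L \<union> Var ` insert e S \<subseteq> {x. r * x \<in> var_ideal S}"
    using I_L_subset_var_ideal by (auto intro: ideal_gen_mult Var_mem_var_ideal)
  then have "var_ideal (insert e S) \<subseteq> {x. r * x \<in> var_ideal S}"
    by (intro ideal_gen_minimal subspace_mult_preimage)
  then show "r \<in> colon (var_ideal S) (var_ideal (insert e S))"
    unfolding colon_def by blast
qed


section \<open>Cancellation of a variable in a distributive lattice\<close>

definition list_monom :: "'a list \<Rightarrow> ('a \<Rightarrow>\<^sub>0 nat)" where
  "list_monom xs = sum_list (map var_exp xs)"

lemma list_monom_Nil [simp]: "list_monom [] = 0"
  and list_monom_Cons [simp]: "list_monom (x # xs) = var_exp x + list_monom xs"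
  by (simp_all add: list_monom_def)

lemma keys_list_monom [simp]: "Poly_Mapping.keys (list_monom xs) = set xs"
  by (induction xs) (simp_all add: keys_add_nat)

lemma mdeg_list_monom [simp]: "mdeg (list_monom xs) = length xs"
  by (induction xs) (simp_all add: mdeg_add)

lemma ex_list_monom: "\<exists>xs. n = list_monom xs"
proof (induction "mdeg n" arbitrary: n)
  case 0
  then show ?case by (metis list_monom_Nil mdeg_eq_0_iff)
next
  case (Suc k)
  then have "n \<noteq> 0" by auto
  then obtain s where s: "s \<in> Poly_Mapping.keys n" by fastforce
  have n: "n = var_exp s + (n - var_exp s)"
    using s by (intro poly_mapping_eqI) (auto simp: lookup_add lookup_minus lookup_single in_keys_iff when_def)
  then have "mdeg (n - var_exp s) = k" using Suc.hyps(2) by (metis mdeg_add mdeg_var_exp plus_1_eq_Suc Suc_inject)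
  with Suc.hyps obtain xs where "n - var_exp s = list_monom xs" by blast
  with n have "n = list_monom (s # xs)" by simp
  then show ?case by blast
qed

fun chain_insert :: "'a::lattice \<Rightarrow> 'a list \<Rightarrow> 'a list" where
  "chain_insert v [] = [v]"
| "chain_insert v (c # cs) = inf v c # chain_insert (sup v c) cs"

fun chain_sort :: "'a::lattice list \<Rightarrow> 'a list" where
  "chain_sort [] = []"
| "chain_sort (x # xs) = chain_insert x (chain_sort xs)"

lemma length_chain_insert [simp]: "length (chain_insert v cs) = Suc (length cs)"
  by (induction cs arbitrary: v) auto

lemma length_chain_sort [simp]: "length (chain_sort xs) = length xs"
  by (induction xs) auto

lemma binom_equiv_chain_insert: "binom_equiv (var_exp v + list_monom cs) (list_monom (chain_insert v cs))"
proof (induction cs arbitrary: v)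
  case (Cons c cs)
  have "binom_equiv (var_exp v + var_exp c + list_monom cs) (var_exp (inf v c) + var_exp (sup v c) + list_monom cs)"
    by (rule binom_equiv_add_right[OF binom_equiv_pair])
  moreover have "binom_equiv (var_exp (inf v c) + (var_exp (sup v c) + list_monom cs))
                             (var_exp (inf v c) + list_monom (chain_insert (sup v c) cs))"
    by (rule binom_equiv_add_left[OF Cons.IH])
  ultimately show ?case by (simp add: add.assoc equivclp_trans)
qed simp

lemma binom_equiv_chain_sort: "binom_equiv (list_monom xs) (list_monom (chain_sort xs))"
proof (induction xs)
  case (Cons x xs)
  have "binom_equiv (var_exp x + list_monom xs) (var_exp x + list_monom (chain_sort xs))"
    by (rule binom_equiv_add_left[OF Cons.IH])
  then show ?case using binom_equiv_chain_insert equivclp_trans by fastforce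
qed simp

lemma chain_insert_lower_bound:
  "z \<le> v \<Longrightarrow> \<forall>c\<in>set cs. z \<le> c \<Longrightarrow> \<forall>y\<in>set (chain_insert v cs). z \<le> y"
  by (induction cs arbitrary: v) (auto intro: le_supI1)

lemma sorted_chain_insert: "sorted_wrt (\<le>) cs \<Longrightarrow> sorted_wrt (\<le>) (chain_insert v cs)"
proof (induction cs arbitrary: v)
  case (Cons c cs)
  have "\<forall>y\<in>set (chain_insert (sup v c) cs). inf v c \<le> y"
    by (rule chain_insert_lower_bound) (use Cons.prems in \<open>auto intro: le_supI1 order_trans[OF inf_le2]\<close>)
  with Cons show ?case by simp
qed simp

lemma sorted_chain_sort: "sorted_wrt (\<le>) (chain_sort xs)"
  by (induction xs) (auto intro: sorted_chain_insert)

lemma binom_equiv_Inf_fin_mem_keys: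
  assumes "n \<noteq> 0"
  obtains n' where "binom_equiv n n'" "Inf_fin (Poly_Mapping.keys n) \<in> Poly_Mapping.keys n'"
proof -
  obtain xs where xs: "n = list_monom xs" using ex_list_monom by blast
  with assms obtain x cs where c: "chain_sort xs = x # cs"
    by (metis length_0_conv length_chain_sort list_monom_Nil neq_Nil_conv)
  have e: "binom_equiv n (list_monom (x # cs))" using xs c binom_equiv_chain_sort by metis
  have "Inf_fin (set (x # cs)) = x"
    using sorted_chain_sort[of xs] by (auto simp: c intro!: antisym Inf_fin.coboundedI Inf_fin.boundedI)
  then have "Inf_fin (Poly_Mapping.keys n) = x"
    using binom_equiv_Inf_fin_keys[OF e] by (simp add: keys_add_nat)
  with e show ?thesis by (intro that[of "list_monom (x # cs)"]) (auto simp: keys_add_nat)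
qed

text \<open>Unlike the usual notion, \<open>join_prime\<close> admits the bottom element; this is harmless here.\<close>

definition join_prime :: "'a::lattice \<Rightarrow> bool" where
  "join_prime j \<longleftrightarrow> (\<forall>u v. j \<le> sup u v \<longrightarrow> j \<le> u \<or> j \<le> v)"

definition count_above :: "'a::lattice \<Rightarrow> ('a \<Rightarrow>\<^sub>0 nat) \<Rightarrow> nat" where
  "count_above j n = (\<Sum>x\<in>Poly_Mapping.keys n. if j \<le> x then Poly_Mapping.lookup n x else 0)"

lemma count_above_add: "count_above j (m + n) = count_above j m + count_above j n"
  unfolding count_above_def by (rule setsum_keys_plus_distrib) simp_all

lemma count_above_zero [simp]: "count_above j 0 = 0"
  by (simp add: count_above_def)

lemma count_above_var_exp: "count_above j (var_exp x) = (if j \<le> x then 1 else 0)"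
  by (simp add: count_above_def)

lemma count_above_list_monom: "count_above j (list_monom xs) = length (filter (\<lambda>x. j \<le> x) xs)"
  by (induction xs) (simp_all add: count_above_add count_above_var_exp)

lemma binom_equiv_count_above:
  assumes "join_prime j" "binom_equiv m m'"
  shows "count_above j m = count_above j m'"
proof (rule equivclp_invariant[OF _ assms(2)])
  fix m m' :: "'a \<Rightarrow>\<^sub>0 nat"
  assume "binom_step m m'"
  then obtain w u v where h: "m = w + var_exp u + var_exp v" "m' = w + var_exp (sup u v) + var_exp (inf u v)"
    unfolding binom_step_def by blast
  have "j \<le> sup u v \<longleftrightarrow> j \<le> u \<or> j \<le> v"
    using assms(1) unfolding join_prime_def by (auto intro: le_supI1 le_supI2)
  then show "count_above j m = count_above j m'"
    by (auto simp: h count_above_add count_above_var_exp)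
qed


lemma distrib_join_prime_separates:
  assumes D: "class.distrib_lattice (inf :: 'a::{finite,lattice} \<Rightarrow> 'a \<Rightarrow> 'a) (\<le>) (<) sup"
    and "\<not> x \<le> (y::'a)"
  obtains j where "join_prime j" "j \<le> x" "\<not> j \<le> y"
proof -
  interpret distrib_lattice "inf :: 'a \<Rightarrow> 'a \<Rightarrow> 'a" "(\<le>)" "(<)" sup by (rule D)
  let ?A = "{z. z \<le> x \<and> \<not> z \<le> y}"
  obtain j where jA: "j \<in> ?A" and jmin: "\<And>z. z \<in> ?A \<Longrightarrow> z \<le> j \<Longrightarrow> j = z"
    using finite_has_minimal2[OF finite, of x ?A] assms(2) by blast
  have "j \<le> u \<or> j \<le> v" if "j \<le> sup u v" for u v
  proof (rule ccontr)
    assume "\<not> (j \<le> u \<or> j \<le> v)"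
    then have "inf j u \<notin> ?A" "inf j v \<notin> ?A"
      using jmin[of "inf j u"] jmin[of "inf j v"] by (metis inf_le1 inf_le2)+
    then have "inf j u \<le> y" "inf j v \<le> y"
      using jA by (auto intro: order_trans[OF inf_le1])
    moreover have "j = sup (inf j u) (inf j v)"
      using that inf_sup_distrib1[of j u v] by (simp add: inf_absorb1)
    ultimately have "j \<le> y" by (metis sup_least)
    with jA show False by simp
  qed
  then have "join_prime j" unfolding join_prime_def by blast
  with jA show ?thesis by (intro that) auto
qed

lemma length_filter_eq_length_sorted:
  assumes "sorted_wrt (\<le>) (x # xs)"
  shows "length (filter (\<lambda>z. j \<le> z) (x # xs)) = length (x # xs) \<longleftrightarrow> j \<le> (x::'a::lattice)"
proof
  assume full: "length (filter (\<lambda>z. j \<le> z) (x # xs)) = length (x # xs)"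
  show "j \<le> x"
  proof (rule ccontr)
    assume "\<not> j \<le> x"
    with full have "length (filter (\<lambda>z. j \<le> z) xs) = Suc (length xs)" by simp
    with length_filter_le[of "\<lambda>z. j \<le> z" xs] show False by linarith
  qed
next
  assume "j \<le> x"
  with assms have "\<forall>z\<in>set (x # xs). j \<le> z" by (auto intro: order_trans)
  then show "length (filter (\<lambda>z. j \<le> z) (x # xs)) = length (x # xs)"
    by (simp only: filter_True)
qed

lemma sorted_eq_if_count_above_eq:
  assumes D: "class.distrib_lattice (inf :: 'a::{finite,lattice} \<Rightarrow> 'a \<Rightarrow> 'a) (\<le>) (<) sup"
  shows "sorted_wrt (\<le>) c \<Longrightarrow> sorted_wrt (\<le>) c' \<Longrightarrow> length c = length c' \<Longrightarrow>
    (\<And>j. join_prime j \<Longrightarrow> count_above j (list_monom c) = count_above j (list_monom c')) \<Longrightarrow>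
    c = (c'::'a list)"
proof (induction c arbitrary: c')
  case (Cons x xs)
  then obtain y ys where c': "c' = y # ys" by (cases c') auto
  have iff: "j \<le> x \<longleftrightarrow> j \<le> y" if "join_prime j" for j
  proof -
    have "count_above j (list_monom (x # xs)) = count_above j (list_monom (y # ys))"
      using Cons.prems(4)[OF that] unfolding c' .
    then have "length (filter ((\<le>) j) (x # xs)) = length (filter ((\<le>) j) (y # ys))"
      by (simp only: count_above_list_monom)
    moreover have "length (x # xs) = length (y # ys)" using Cons.prems(3) c' by simp
    moreover have "sorted_wrt (\<le>) (y # ys)" using Cons.prems(2) c' by simp
    ultimately show ?thesis
      using length_filter_eq_length_sorted[OF Cons.prems(1)] length_filter_eq_length_sorted[of y ys]
      by metis
  qed
  have "x \<le> y"
  proof (rule ccontr)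
    assume "\<not> x \<le> y"
    with iff show False by (metis distrib_join_prime_separates[OF D])
  qed
  moreover have "y \<le> x"
  proof (rule ccontr)
    assume "\<not> y \<le> x"
    with iff show False by (metis distrib_join_prime_separates[OF D])
  qed
  ultimately have "x = y" by (rule antisym)
  moreover have "xs = ys"
  proof (rule Cons.IH)
    show "sorted_wrt (\<le>) xs" "sorted_wrt (\<le>) ys" "length xs = length ys"
      using Cons.prems(1-3) by (simp_all add: c')
    show "count_above j (list_monom xs) = count_above j (list_monom ys)" if "join_prime j" for j
      using Cons.prems(4)[OF that] \<open>x = y\<close> by (simp add: c' count_above_add)
  qed
  ultimately show ?case by (simp add: c')
qed simp

theorem binom_equiv_cancel:
  assumes D: "class.distrib_lattice (inf :: 'a::{finite,lattice} \<Rightarrow> 'a \<Rightarrow> 'a) (\<le>) (<) sup"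
    and e: "binom_equiv (m + var_exp a) (m' + var_exp (a::'a))"
  shows "binom_equiv m m'"
proof -
  obtain xs xs' where xs: "m = list_monom xs" "m' = list_monom xs'" by (metis ex_list_monom)
  let ?c = "chain_sort xs" and ?c' = "chain_sort xs'"
  have e': "binom_equiv m (list_monom ?c)" "binom_equiv m' (list_monom ?c')"
    using xs binom_equiv_chain_sort by auto
  have "length xs = length xs'"
    using binom_equiv_mdeg[OF e] xs by (simp add: mdeg_add)
  moreover have "count_above j (list_monom ?c) = count_above j (list_monom ?c')" if "join_prime j" for j
    using binom_equiv_count_above[OF that e] binom_equiv_count_above[OF that e'(1)]
      binom_equiv_count_above[OF that e'(2)]
    by (simp add: count_above_add)
  ultimately have "?c = ?c'"
    by (intro sorted_eq_if_count_above_eq[OF D] sorted_chain_sort) simp_all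
  with e' show ?thesis by (metis equivclp_sym equivclp_trans)
qed


section \<open>Colon ideals of down-closed sets in a distributive lattice\<close>

definition down_closed :: "'a::order set \<Rightarrow> bool" where
  "down_closed S \<longleftrightarrow> (\<forall>x\<in>S. \<forall>y. y \<le> x \<longrightarrow> y \<in> S)"

lemma down_closed_inf_preimage:
  fixes a :: "'a::lattice"
  assumes "down_closed S"
  shows "down_closed {t. inf t a \<in> S}"
  unfolding down_closed_def
proof (intro ballI allI impI CollectI)
  fix x y assume "x \<in> {t. inf t a \<in> S}" "y \<le> x"
  moreover have "inf y a \<le> inf x a" using \<open>y \<le> x\<close> by (simp add: le_infI1)
  ultimately show "inf y a \<in> S" using assms unfolding down_closed_def by blast
qed

lemma class_avoids_add_var_exp:
  fixes a :: "'a::lattice"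
  assumes "down_closed S" "a \<notin> S" "class_avoids {t. inf t a \<in> S} m"
  shows "class_avoids S (m + var_exp a)"
  unfolding class_avoids_def
proof (intro allI impI equals0I)
  fix n s
  assume n: "binom_equiv (m + var_exp a) n" and s: "s \<in> Poly_Mapping.keys n \<inter> S"
  moreover have "Inf_fin (Poly_Mapping.keys n) \<le> s"
    using s by (simp add: Inf_fin.coboundedI)
  ultimately have "Inf_fin (Poly_Mapping.keys n) \<in> S"
    using assms(1) unfolding down_closed_def by blast
  then have meet: "Inf_fin (Poly_Mapping.keys (m + var_exp a)) \<in> S"
    by (simp add: binom_equiv_Inf_fin_keys[OF n])
  show False
  proof (cases "m = 0")
    case True
    with meet assms(2) show False by simp
  next
    case False
    then obtain n' where n': "binom_equiv m n'" "Inf_fin (Poly_Mapping.keys m) \<in> Poly_Mapping.keys n'"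
      by (rule binom_equiv_Inf_fin_mem_keys)
    from False meet have "inf (Inf_fin (Poly_Mapping.keys m)) a \<in> S"
      by (simp add: keys_add_nat inf_commute)
    with n' assms(3) show False unfolding class_avoids_def by blast
  qed
qed

lemma coeff_sum_mult_Var:
  fixes a :: "'a::{finite,lattice}"
  assumes D: "class.distrib_lattice (inf :: 'a \<Rightarrow> 'a \<Rightarrow> 'a) (\<le>) (<) sup"
  shows "coeff_sum (binom_class (m + var_exp a)) (r * Var a) = coeff_sum (binom_class m) r"
proof -
  have iff: "w + var_exp a \<in> binom_class (m + var_exp a) \<longleftrightarrow> w \<in> binom_class m" for w
    unfolding binom_class_def mem_Collect_eq using binom_equiv_cancel[OF D] binom_equiv_add_right by blast
  have "r * Var a = (\<Sum>w\<in>Poly_Mapping.keys r. Poly_Mapping.single (w + var_exp a) (Poly_Mapping.lookup r w))"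
    by (subst poly_mapping_sum_single[of r]) (simp add: sum_distrib_right single_mult_Var)
  then have "coeff_sum (binom_class (m + var_exp a)) (r * Var a) =
             (\<Sum>w\<in>Poly_Mapping.keys r. if w \<in> binom_class m then Poly_Mapping.lookup r w else 0)"
    by (simp add: coeff_sum_sum coeff_sum_single iff)
  then show ?thesis by (simp add: coeff_sum_def)
qed

theorem colon_var_ideal_distrib:
  fixes a :: "'a::{finite,lattice}"
  assumes D: "class.distrib_lattice (inf :: 'a \<Rightarrow> 'a \<Rightarrow> 'a) (\<le>) (<) sup"
    and S: "down_closed S" "a \<notin> S"
  shows "colon (var_ideal S) (var_ideal (insert a S)) = (var_ideal {t. inf t a \<in> S} :: ('a, 'k::comm_ring_1) mpoly set)"
  unfolding colon_var_ideal_insert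
proof (intro subset_antisym subsetI CollectI)
  fix r :: "('a, 'k) mpoly"
  assume "r \<in> {r. r * Var a \<in> var_ideal S}"
  then have "coeff_sum (binom_class (m + var_exp a)) (r * Var a) = 0"
    if "class_avoids {t. inf t a \<in> S} m" for m
    using coeff_sum_binom_class_eq_0[OF class_avoids_add_var_exp[OF S that]] by simp
  then have "coeff_sum (binom_class m) r = 0" if "class_avoids {t. inf t a \<in> S} m" for m
    using that by (simp add: coeff_sum_mult_Var[OF D])
  then show "r \<in> var_ideal {t. inf t a \<in> S}"
    by (simp add: mem_var_ideal_iff)
next
  have "Var a * Var t \<in> var_ideal S" if "inf t a \<in> S" for t
  proof (cases "t \<le> a \<or> a \<le> t")
    case True
    with that S(2) have "t \<in> S" by (auto simp: inf_absorb1 inf_absorb2)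
    then show ?thesis by (intro ideal_gen_mult Var_mem_var_ideal)
  next
    case False
    then have "basic_binomial t a \<in> var_ideal S"
      by (intro I_L_mem_var_ideal basic_binomial_mem_I_L) auto
    moreover have "Var (sup t a) * Var (inf t a) \<in> var_ideal S"
      using that by (intro ideal_gen_mult Var_mem_var_ideal)
    ultimately have "basic_binomial t a + Var (sup t a) * Var (inf t a) \<in> var_ideal S"
      by (rule ideal_gen_add)
    then show ?thesis by (simp add: basic_binomial_def mult.commute)
  qed
  then have "I_L \<union> Var ` {t. inf t a \<in> S} \<subseteq> {r. Var a * r \<in> var_ideal S}"
    using I_L_subset_var_ideal by (auto intro: ideal_gen_mult)
  then have "var_ideal {t. inf t a \<in> S} \<subseteq> {r. Var a * r \<in> var_ideal S}"
    by (intro ideal_gen_minimal subspace_mult_preimage)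
  then show "r \<in> var_ideal {t. inf t a \<in> S} \<Longrightarrow> r * Var a \<in> var_ideal S" for r :: "('a, 'k) mpoly"
    by (auto simp: mult.commute)
qed


section \<open>Distributive lattices admit combinatorial Koszul filtrations\<close>

lemma linear_form_Var: "linear_form (Var a)"
  by (simp add: linear_form_def Var_def)

lemma koszul_step_down_closed:
  fixes F :: "('a::{finite,lattice}, 'k::comm_ring_1) mpoly set set"
  assumes D: "class.distrib_lattice (inf :: 'a \<Rightarrow> 'a \<Rightarrow> 'a) (\<le>) (<) sup"
    and F: "F = {var_ideal S | S. down_closed S}"
    and S: "down_closed S" "S \<noteq> {}"
  shows "\<exists>J\<in>F. J \<subset> var_ideal S \<and> (\<exists>f. var_ideal S = ideal_gen (J \<union> {f})) \<and> colon J (var_ideal S) \<in> F"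
proof -
  obtain a where a: "a \<in> S" and max: "\<And>b. b \<in> S \<Longrightarrow> a \<le> b \<Longrightarrow> a = b"
    using finite_has_maximal[OF finite S(2)] by blast
  let ?S' = "S - {a}"
  have down: "down_closed ?S'"
    using S(1) max unfolding down_closed_def by (metis Diff_iff singletonD singletonI)
  have S_eq: "insert a ?S' = S" using a by blast
  have "var_ideal ?S' \<subset> (var_ideal S :: ('a, 'k) mpoly set)"
    using a var_ideal_mono[of ?S' S] var_ideal_inj[of ?S' S] by blast
  moreover have "var_ideal S = ideal_gen (var_ideal ?S' \<union> {Var a :: ('a, 'k) mpoly})"
    using var_ideal_insert[of a ?S'] by (simp only: S_eq)
  moreover have "colon (var_ideal ?S') (var_ideal S) = (var_ideal {t. inf t a \<in> ?S'} :: ('a, 'k) mpoly set)"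
    using colon_var_ideal_distrib[OF D down, of a] by (simp only: S_eq) simp
  ultimately show ?thesis
    using down down_closed_inf_preimage[OF down, of a] unfolding F by blast
qed

theorem distrib_combinatorial_koszul_filtration:
  fixes F :: "('a::{finite,lattice}, 'k::field) mpoly set set"
  assumes D: "class.distrib_lattice (inf :: 'a \<Rightarrow> 'a \<Rightarrow> 'a) (\<le>) (<) sup"
    and F: "F = {var_ideal S | S. down_closed S}"
  shows "combinatorial_koszul_filtration_H F"
  unfolding combinatorial_koszul_filtration_H_def koszul_filtration_H_def
proof (intro conjI ballI impI)
  fix I assume "I \<in> F"
  then obtain S where S: "I = var_ideal S" "down_closed S" by (auto simp: F)
  then show "\<exists>V. (\<forall>v\<in>V. linear_form v) \<and> I = ideal_gen (I_L \<union> V)"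
    by (intro exI[of _ "Var ` S"]) (auto intro: linear_form_Var)
  show "\<exists>S. I = var_ideal S" using S by blast
  assume "I \<noteq> I_L"
  with S have "S \<noteq> {}" by (metis var_ideal_empty)
  with koszul_step_down_closed[OF D F S(2)] S(1)
  show "\<exists>J\<in>F. J \<subset> I \<and> (\<exists>f. I = ideal_gen (J \<union> {f})) \<and> colon J I \<in> F"
    by simp
next
  have "down_closed ({} :: 'a set)" by (simp add: down_closed_def)
  then show "I_L \<in> F"
    unfolding F by (intro CollectI exI[of _ "{}"]) (simp add: var_ideal_empty)
  show "ideal_gen (I_L \<union> range Var) \<in> F"
    by (auto simp: F down_closed_def)
qed


section \<open>Diamonds in non-distributive modular lattices\<close>

lemma modular_law:
  assumes "modular_lattice TYPE('a::lattice)" "(x::'a) \<le> b"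
  shows "sup x (inf a b) = inf (sup x a) b"
  using assms unfolding modular_lattice_def by blast

lemma not_distrib_lattice_witness:
  assumes "\<not> class.distrib_lattice (inf :: 'a::lattice \<Rightarrow> 'a \<Rightarrow> 'a) (\<le>) (<) sup"
  obtains x y z :: "'a::lattice" where "sup x (inf y z) \<noteq> inf (sup x y) (sup x z)"
proof -
  have "class.lattice (inf :: 'a \<Rightarrow> _) (\<le>) (<) sup" by unfold_locales
  with assms that show ?thesis
    unfolding class.distrib_lattice_def class.distrib_lattice_axioms_def by blast
qed

definition diamond :: "'a::lattice \<Rightarrow> 'a \<Rightarrow> 'a \<Rightarrow> 'a \<Rightarrow> 'a \<Rightarrow> bool" where
  "diamond p a b c q \<longleftrightarrow> inf a b = p \<and> inf a c = p \<and> inf b c = p \<and>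
     sup a b = q \<and> sup a c = q \<and> sup b c = q \<and> p \<noteq> q"

lemma diamond_swap12: "diamond p a b c q \<Longrightarrow> diamond p b a c q"
  and diamond_swap13: "diamond p a b c q \<Longrightarrow> diamond p c b a q"
  unfolding diamond_def by (simp_all add: inf_commute sup_commute)

lemma diamond_eqs:
  assumes "diamond p a b c q"
  shows "inf a b = p" "inf a c = p" "inf b c = p" "sup a b = q" "sup a c = q" "sup b c = q" "p \<noteq> q"
  using assms by (simp_all add: diamond_def)

lemma diamond_le:
  assumes "diamond p a b c q"
  shows "p \<le> a" "p \<le> b" "p \<le> c" "a \<le> q" "b \<le> q" "c \<le> q" "p \<le> q"
proof -
  show pa: "p \<le> a" and "p \<le> b" "p \<le> c" and aq: "a \<le> q" and "b \<le> q" "c \<le> q"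
    using diamond_eqs[OF assms] by (metis inf_le1 inf_le2 sup_ge1 sup_ge2)+
  from pa aq show "p \<le> q" by (rule order.trans)
qed

lemma diamond_first_distinct:
  assumes "diamond p a b c q"
  shows "a \<noteq> b" "a \<noteq> p" "a \<noteq> q"
  using assms unfolding diamond_def
  by (metis inf.idem sup.idem, metis inf.absorb_iff1 sup.absorb_iff2, metis inf.absorb2 inf_sup_ord(4) sup.idem)

lemma diamond_distinct:
  assumes "diamond p a b c q"
  shows "a \<noteq> b" "a \<noteq> c" "b \<noteq> c" "a \<noteq> p" "a \<noteq> q" "b \<noteq> p" "b \<noteq> q" "c \<noteq> p" "c \<noteq> q"
  using diamond_first_distinct[OF assms] diamond_first_distinct[OF diamond_swap12[OF assms]]
    diamond_first_distinct[OF diamond_swap13[OF assms]]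
    diamond_first_distinct[OF diamond_swap13[OF diamond_swap12[OF assms]]]
  by auto

definition lower_median :: "'a::lattice \<Rightarrow> 'a \<Rightarrow> 'a \<Rightarrow> 'a" where
  "lower_median x y z = sup (sup (inf x y) (inf y z)) (inf z x)"

definition upper_median :: "'a::lattice \<Rightarrow> 'a \<Rightarrow> 'a \<Rightarrow> 'a" where
  "upper_median x y z = inf (inf (sup x y) (sup y z)) (sup z x)"

text \<open>Dedekind's construction of a diamond between the two medians of three elements violating
  distributivity.\<close>

context
  fixes x y z :: "'a::lattice"
  assumes M: "modular_lattice TYPE('a)"
begin

abbreviation (input) "lo \<equiv> lower_median x y z"
abbreviation (input) "hi \<equiv> upper_median x y z"

lemma lower_median_le_upper_median: "lo \<le> hi"
  unfolding lower_median_def upper_median_def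
  by (meson inf.coboundedI1 inf.coboundedI2 inf_greatest le_supI le_supI1 le_supI2 inf_le1 inf_le2 sup_ge1 sup_ge2)

lemma inf_upper_median: "inf x hi = inf x (sup y z)" "inf y hi = inf y (sup z x)"
  unfolding upper_median_def by (rule antisym; simp add: le_infI1 le_infI2)+

lemma median_projection_inf: "inf (sup (inf x hi) lo) (sup (inf y hi) lo) = lo"
proof -
  let ?b = "sup (inf y hi) lo"
  have b: "?b = sup (inf y (sup z x)) (inf z x)"
    unfolding inf_upper_median lower_median_def
    by (rule antisym) (simp_all add: le_supI1 le_supI2 le_infI1 le_infI2 inf.coboundedI1 inf.coboundedI2)
  also have "\<dots> = inf (sup y (inf z x)) (sup z x)"
    using modular_law[OF M, of "inf z x" "sup z x" y] by (simp add: sup_commute le_supI2)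
  finally have "inf (inf x hi) ?b \<le> inf x (sup y (inf z x))"
    by (auto intro: le_infI1 le_infI2)
  also have "\<dots> = sup (inf z x) (inf y x)"
    using modular_law[OF M, of "inf z x" x y] by (simp add: inf_commute sup_commute)
  also have "\<dots> \<le> lo"
    unfolding lower_median_def by (simp add: inf_commute le_supI1 le_supI2)
  finally have "inf (inf x hi) ?b \<le> lo" .
  moreover have "inf (sup (inf x hi) lo) ?b = sup lo (inf (inf x hi) ?b)"
    using modular_law[OF M, of lo ?b "inf x hi"] by (simp add: sup_commute)
  ultimately show ?thesis by (simp add: sup.absorb1)
qed

lemma median_projection_sup: "sup (sup (inf x hi) lo) (sup (inf y hi) lo) = hi"
proof (rule antisym)
  show "sup (sup (inf x hi) lo) (sup (inf y hi) lo) \<le> hi"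
    using lower_median_le_upper_median by simp
next
  define P where "P = sup (inf x (sup y z)) (inf y z)"
  have "sup (inf y z) (inf x (sup y z)) = inf (sup (inf y z) x) (sup y z)"
    by (rule modular_law[OF M]) (simp add: le_supI1)
  then have P: "P = inf (sup x (inf y z)) (sup y z)"
    unfolding P_def by (simp add: sup_commute)
  have "P \<le> sup z x" unfolding P by (rule le_infI1) (simp add: le_infI2 le_supI1)
  then have "sup P (inf y (sup z x)) = inf (sup P y) (sup z x)"
    using modular_law[OF M, of P "sup z x" y] by (simp add: inf_commute)
  moreover have "sup y P = inf (sup y (sup x (inf y z))) (sup y z)"
    unfolding P using modular_law[OF M, of y "sup y z" "sup x (inf y z)"] by simp
  then have "sup P y = inf (sup x y) (sup y z)"
    by (simp add: sup_commute sup_left_commute sup_inf_absorb)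
  ultimately have "hi = sup P (inf y (sup z x))" unfolding upper_median_def by simp
  also have "\<dots> \<le> sup (sup (inf x hi) lo) (sup (inf y hi) lo)"
    unfolding P_def inf_upper_median lower_median_def by (simp add: le_supI1 le_supI2)
  finally show "hi \<le> sup (sup (inf x hi) lo) (sup (inf y hi) lo)" .
qed

lemma lower_median_neq_upper_median:
  assumes "sup x (inf y z) \<noteq> inf (sup x y) (sup x z)"
  shows "lo \<noteq> hi"
proof
  assume eq: "lo = hi"
  have "sup x lo = sup x (inf y z)"
    unfolding lower_median_def
    by (rule antisym) (simp_all add: le_supI1 le_supI2 le_infI1 le_infI2 inf.coboundedI1 inf.coboundedI2)
  moreover have "sup x hi = inf (sup x y) (sup x z)"
  proof -
    let ?B = "inf (sup x y) (sup x z)"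
    have "hi = inf (sup y z) ?B" unfolding upper_median_def
      by (simp add: inf_commute inf_left_commute sup_commute)
    moreover have "sup x (inf (sup y z) ?B) = inf (sup x (sup y z)) ?B"
      by (rule modular_law[OF M]) simp
    moreover have "inf (sup x (sup y z)) ?B = ?B"
      by (simp add: inf.absorb2 le_infI1 le_supI2)
    ultimately show ?thesis by simp
  qed
  ultimately show False using assms eq by simp
qed

end

lemma nondistrib_modular_diamond:
  assumes M: "modular_lattice TYPE('a::lattice)"
    and "\<not> class.distrib_lattice (inf :: 'a \<Rightarrow> 'a \<Rightarrow> 'a) (\<le>) (<) sup"
  obtains p a b c q :: "'a::lattice" where "diamond p a b c q"
proof -
  obtain x y z :: 'a where xyz: "sup x (inf y z) \<noteq> inf (sup x y) (sup x z)"
    using not_distrib_lattice_witness[OF assms(2)] by blast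
  let ?d = "lower_median x y z" and ?u = "upper_median x y z"
  have P: "lower_median x z y = ?d" "lower_median y z x = ?d" "upper_median x z y = ?u" "upper_median y z x = ?u"
    by (simp_all add: lower_median_def upper_median_def ac_simps)
  have "diamond ?d (sup (inf x ?u) ?d) (sup (inf y ?u) ?d) (sup (inf z ?u) ?d) ?u"
    unfolding diamond_def
    using median_projection_inf[OF M, of x y z] median_projection_inf[OF M, of x z y, unfolded P]
      median_projection_inf[OF M, of y z x, unfolded P]
      median_projection_sup[OF M, of x y z] median_projection_sup[OF M, of x z y, unfolded P]
      median_projection_sup[OF M, of y z x, unfolded P]
      lower_median_neq_upper_median[OF M xyz]
    by simp
  then show ?thesis by (rule that)
qed

lemma diamond_sup_less_top:
  assumes M: "modular_lattice TYPE('a::lattice)" and d: "diamond p a b c (q::'a)"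
    and "p \<le> x" "x < a"
  shows "sup x b < q"
proof -
  note e = diamond_eqs[OF d] and l = diamond_le[OF d]
  have "sup x b \<noteq> q"
  proof
    assume "sup x b = q"
    then have "inf (sup x b) a = a" using l(4) by (simp add: inf.absorb2)
    moreover have "sup x (inf b a) = x" using e(1) assms(3) by (simp add: inf_commute sup.absorb1)
    ultimately have "x = a" using modular_law[OF M, of x a b] assms(4) by simp
    with assms(4) show False by simp
  qed
  moreover have "sup x b \<le> q" using assms(4) l(4,5) by simp
  ultimately show ?thesis by (auto simp: less_le)
qed

lemma diamond_inf_greater_bottom:
  assumes M: "modular_lattice TYPE('a::lattice)" and d: "diamond p a b c (q::'a)"
    and "a < x" "x \<le> q"
  shows "p < inf x c"
proof -
  note e = diamond_eqs[OF d] and l = diamond_le[OF d]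
  have "inf x c \<noteq> p"
  proof
    assume "inf x c = p"
    then have "sup a (inf c x) = a" using l(1) by (simp add: inf_commute sup.absorb1)
    moreover have "inf (sup a c) x = x" using e(5) assms(4) by (simp add: inf.absorb2)
    ultimately have "a = x" using modular_law[OF M, of a x c] assms(3) by simp
    with assms(3) show False by simp
  qed
  moreover have "p \<le> inf x c" using assms(3) l(1,3) by simp
  ultimately show ?thesis by (auto simp: less_le)
qed

lemma diamond_lower_subinterval:
  assumes M: "modular_lattice TYPE('a::lattice)" and d: "diamond p a b c (q::'a)"
    and "p < x" "x < a"
  obtains y z q' where "diamond p x y z q'" "q' < q"
proof -
  note e = diamond_eqs[OF d] and l = diamond_le[OF d]
  let ?y = "inf (sup x c) b" and ?z = "inf (sup x b) c" and ?q = "inf (sup x c) (sup x b)"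
  have x: "p \<le> x" "x \<le> a" using assms(3,4) by simp_all
  have "inf x ?y \<le> inf a b" "inf x ?z \<le> inf a c" "inf ?y ?z \<le> inf b c"
    using x by (simp_all add: le_infI1 le_infI2)
  moreover have "p \<le> inf x ?y" "p \<le> inf x ?z" "p \<le> inf ?y ?z"
    using x l(2,3) by (simp_all add: le_supI1)
  ultimately have meets: "inf x ?y = p" "inf x ?z = p" "inf ?y ?z = p"
    using e(1-3) by (simp_all add: antisym)
  have "sup x ?y = ?q" "sup x ?z = ?q"
    using modular_law[OF M, of x "sup x c" b] modular_law[OF M, of x "sup x b" c]
    by (simp_all add: inf_commute)
  moreover have "sup ?y c = sup x c"
    using modular_law[OF M, of c "sup x c" b] e(6) x(2) l(4,6)
    by (simp add: sup_commute inf_commute inf.absorb2)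
  then have "sup ?y ?z = ?q"
    using modular_law[OF M, of ?y "sup x b" c] by (simp add: inf_commute le_supI2)
  moreover have "p \<noteq> ?q"
    using assms(3) by (metis le_infI less_le_not_le sup_ge1)
  ultimately have "diamond p x ?y ?z ?q"
    unfolding diamond_def using meets by simp
  moreover have "?q < q"
    using diamond_sup_less_top[OF M d x(1) assms(4)] by (rule le_less_trans[OF inf_le2])
  ultimately show ?thesis by (rule that)
qed

lemma diamond_upper_subinterval:
  assumes M: "modular_lattice TYPE('a::lattice)" and d: "diamond p a b c (q::'a)"
    and "a < x" "x < q"
  obtains p' y z where "diamond p' x y z q" "p < p'"
proof -
  note e = diamond_eqs[OF d] and l = diamond_le[OF d]
  let ?y = "sup (inf x c) b" and ?z = "sup (inf x b) c" and ?p = "sup (inf x c) (inf x b)"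
  have x: "a \<le> x" "x \<le> q" using assms(3,4) by simp_all
  have "sup a b \<le> sup x ?y" "sup a c \<le> sup x ?z" "sup b c \<le> sup ?y ?z"
    using x by (simp_all add: le_supI1 le_supI2)
  moreover have "sup x ?y \<le> q" "sup x ?z \<le> q" "sup ?y ?z \<le> q"
    using x l(5,6) by (simp_all add: le_infI1)
  ultimately have joins: "sup x ?y = q" "sup x ?z = q" "sup ?y ?z = q"
    using e(4-6) by (simp_all add: antisym)
  have "p \<le> inf x c" using order_trans[OF l(1) x(1)] l(3) by simp
  with e(3) modular_law[OF M, of "inf x c" c b] have "inf c ?y = inf x c"
    by (simp add: inf_commute sup.absorb1)
  moreover have "sup (inf x b) (inf c ?y) = inf (sup (inf x b) c) ?y"
    by (rule modular_law[OF M]) (simp add: le_supI2)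
  ultimately have "inf ?y ?z = ?p" by (simp add: inf_commute sup_commute)
  moreover have "inf x ?y = ?p" "inf x ?z = ?p"
    using modular_law[OF M, of "inf x c" x b] modular_law[OF M, of "inf x b" x c]
    by (simp_all add: inf_commute sup_commute)
  moreover have "?p \<noteq> q"
    using assms(4) by (metis le_supI less_le_not_le inf_le1)
  ultimately have "diamond ?p x ?y ?z q"
    unfolding diamond_def using joins by simp
  moreover have "p < ?p"
    using diamond_inf_greater_bottom[OF M d assms(3) x(2)] by (rule less_le_trans) simp
  ultimately show ?thesis by (rule that)
qed

lemma diamond_rotate:
  assumes "diamond p a b c q" "m \<in> {a, b, c}"
  obtains b' c' where "diamond p m b' c' q"
  using assms diamond_swap12 diamond_swap13 by blast

lemma tight_diamond:
  assumes M: "modular_lattice TYPE('a::{finite,lattice})" and "diamond p a b c (q::'a)"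
  obtains p a b c q :: "'a::{finite,lattice}" where "diamond p a b c q"
    "\<And>m x. m \<in> {a, b, c} \<Longrightarrow> \<not> (p < x \<and> x < m)"
    "\<And>m x. m \<in> {a, b, c} \<Longrightarrow> \<not> (m < x \<and> x < q)"
  using assms(2)
proof (induction "card {p..q}" arbitrary: p a b c q rule: less_induct)
  case less
  note d0 = less.prems(2)
  show ?case
  proof (cases "\<exists>m\<in>{a, b, c}. \<exists>x. p < x \<and> x < m")
    case True
    then obtain m x where "m \<in> {a, b, c}" "p < x" "x < m" by blast
    with d0 obtain b' c' where "diamond p m b' c' q" by (metis diamond_rotate)
    from M this \<open>p < x\<close> \<open>x < m\<close> obtain y z q' where d: "diamond p x y z q'" and "q' < q"
      by (rule diamond_lower_subinterval)
    have "{p..q'} \<subseteq> {p..q}" "q \<in> {p..q} - {p..q'}"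
      using \<open>q' < q\<close> diamond_le(7)[OF d0] by (auto dest: order.strict_trans1)
    then have "{p..q'} \<subset> {p..q}" by blast
    then have "card {p..q'} < card {p..q}" by (rule psubset_card_mono[OF finite])
    from less.hyps[OF this that d] show ?thesis .
  next
    case no_lower: False
    show ?thesis
    proof (cases "\<exists>m\<in>{a, b, c}. \<exists>x. m < x \<and> x < q")
      case True
      then obtain m x where "m \<in> {a, b, c}" "m < x" "x < q" by blast
      with d0 obtain b' c' where "diamond p m b' c' q" by (metis diamond_rotate)
      from M this \<open>m < x\<close> \<open>x < q\<close> obtain p' y z where d: "diamond p' x y z q" and "p < p'"
        by (rule diamond_upper_subinterval)
      have "{p'..q} \<subseteq> {p..q}" "p \<in> {p..q} - {p'..q}"
        using \<open>p < p'\<close> diamond_le(7)[OF d0] by (auto dest: order.strict_trans2)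
      then have "{p'..q} \<subset> {p..q}" by blast
      then have "card {p'..q} < card {p..q}" by (rule psubset_card_mono[OF finite])
      from less.hyps[OF this that d] show ?thesis .
    next
      case False
      show ?thesis by (rule that[OF d0]) (use no_lower False in blast)+
    qed
  qed
qed

lemma relative_complement_of_atom:
  fixes p q m e :: "'a::lattice"
  assumes below: "\<And>x. \<not> (p < x \<and> x < m)" and above: "\<And>x. \<not> (m < x \<and> x < q)"
    and "p \<le> m" "m \<le> q" "p < e" "e < q" "e \<noteq> m"
  shows "inf e m = p" "sup e m = q"
proof -
  have "inf e m \<noteq> m"
    using above[of e] assms(5-7) by (metis inf.absorb_iff2 inf.orderE order.not_eq_order_implies_strict)
  then show "inf e m = p"
    using below[of "inf e m"] assms(3,5) by (metis inf_le2 le_inf_iff less_imp_le order.not_eq_order_implies_strict)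
  have "sup e m \<noteq> m"
    using below[of e] assms(5-7) by (metis sup.absorb_iff2 sup.orderE order.not_eq_order_implies_strict)
  then show "sup e m = q"
    using above[of "sup e m"] assms(4,6) by (metis sup_ge2 le_sup_iff less_imp_le order.not_eq_order_implies_strict)
qed

theorem nondistrib_modular_diamond_relative_complements:
  assumes M: "modular_lattice TYPE('a::{finite,lattice})"
    and "\<not> class.distrib_lattice (inf :: 'a \<Rightarrow> 'a \<Rightarrow> 'a) (\<le>) (<) sup"
  obtains p a b c q :: "'a::{finite,lattice}" where "diamond p a b c q"
    "\<forall>e. p < e \<and> e < q \<longrightarrow> (\<exists>u v. u \<noteq> v \<and> inf e u = p \<and> sup e u = q \<and> inf e v = p \<and> sup e v = q)"
proof -
  obtain p a b c q :: 'a where d: "diamond p a b c q"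
    and below: "\<And>m x. m \<in> {a, b, c} \<Longrightarrow> \<not> (p < x \<and> x < m)"
    and above: "\<And>m x. m \<in> {a, b, c} \<Longrightarrow> \<not> (m < x \<and> x < q)"
    using nondistrib_modular_diamond[OF assms] tight_diamond[OF M] by metis
  note e = diamond_eqs[OF d] and l = diamond_le[OF d] and ne = diamond_distinct[OF d]
  have "\<exists>u v. u \<noteq> v \<and> inf t u = p \<and> sup t u = q \<and> inf t v = p \<and> sup t v = q"
    if "p < t" "t < q" for t
  proof (cases "t \<in> {a, b, c}")
    case True
    then consider "t = a" | "t = b" | "t = c" by blast
    then show ?thesis
      by cases (use e ne in \<open>metis inf_commute sup_commute\<close>)+
  next
    case False
    have "inf t m = p \<and> sup t m = q" if "m \<in> {a, b}" for m
      using relative_complement_of_atom[of p m q t] below[of m] above[of m] l \<open>p < t\<close> \<open>t < q\<close> False that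
      by auto
    with ne(1) show ?thesis by blast
  qed
  with d show ?thesis using that by blast
qed

section \<open>Combinatorial Koszul filtrations force distributivity\<close>

lemma relative_complements_incomparable:
  fixes x y :: "'a::lattice"
  assumes "inf x y = p" "sup x y = q" "x \<noteq> p" "x \<noteq> q"
  shows "\<not> x \<le> y" "\<not> y \<le> x"
  using assms by (metis inf_absorb1, metis sup_absorb1)

lemma diamond_binomial_mem_I_L:
  assumes d: "diamond p a b c q"
  shows "(Var p * Var q * (Var a - Var b) :: ('a::lattice, 'k::comm_ring_1) mpoly) \<in> I_L"
proof -
  note e = diamond_eqs[OF d] and ne = diamond_distinct[OF d]
  have "basic_binomial a c \<in> (I_L :: ('a, 'k) mpoly set)" "basic_binomial b c \<in> (I_L :: ('a, 'k) mpoly set)"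
    using relative_complements_incomparable[OF e(2) e(5) ne(4,5)]
      relative_complements_incomparable[OF e(3) e(6) ne(6,7)]
    by (metis basic_binomial_mem_I_L)+
  then have "Var b * basic_binomial a c - Var a * basic_binomial b c \<in> (I_L :: ('a, 'k) mpoly set)"
    unfolding I_L_def by (intro ideal_gen_diff ideal_gen_mult)
  moreover have "Var b * basic_binomial a c - Var a * basic_binomial b c =
                 (Var p * Var q * (Var a - Var b) :: ('a, 'k) mpoly)"
    unfolding basic_binomial_def using e by (simp add: algebra_simps)
  ultimately show ?thesis by simp
qed

lemma mem_var_ideal_colonD:
  assumes "colon (var_ideal S) (var_ideal (insert e S)) = (var_ideal T :: ('a::lattice, 'k::comm_ring_1) mpoly set)"
  shows "r \<in> var_ideal T \<longleftrightarrow> r * Var e \<in> (var_ideal S :: ('a, 'k) mpoly set)"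
  unfolding assms[symmetric] colon_var_ideal_insert by simp

lemma colon_var_ideal_interval_disjoint:
  assumes colon: "colon (var_ideal S) (var_ideal (insert e S)) = (var_ideal T :: ('a::lattice, 'k::comm_ring_1) mpoly set)"
    and S: "S \<inter> {p..q} = {}" and e: "e \<in> {p..q}"
  shows "T \<inter> {p..q} = {}"
proof (intro equals0I)
  fix w assume w: "w \<in> T \<inter> {p..q}"
  then have "Var w * Var e \<in> (var_ideal S :: ('a, 'k) mpoly set)"
    using mem_var_ideal_colonD[OF colon] Var_mem_var_ideal by blast
  then obtain s where s: "s \<in> S" "inf w e \<le> s" "s \<le> sup w e"
    using Var_mult_Var_mem_var_ideal by blast
  have "p \<le> inf w e" "sup w e \<le> q"
    using w e by simp_all
  then have "s \<in> {p..q}"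
    using s(2,3) by (simp add: order.trans[of p "inf w e" s] order.trans[of s "sup w e" q])
  with s(1) S show False by blast
qed

lemma colon_var_ideal_diamond_endpoint:
  assumes colon: "colon (var_ideal S) (var_ideal (insert e S)) = (var_ideal T :: ('a::lattice, 'k::comm_ring_1) mpoly set)"
    and d: "diamond p a b c q" and e: "e = p \<or> e = q"
  shows "T \<inter> {p..q} \<noteq> {}"
proof -
  note l = diamond_le[OF d] and ne = diamond_distinct[OF d]
  define e' where "e' = (if e = p then q else p)"
  have "(Var e' * Var a - Var e' * Var b) * Var e = (Var p * Var q * (Var a - Var b) :: ('a, 'k) mpoly)"
    using e unfolding e'_def by (cases "e = p") (simp_all add: algebra_simps)
  then have "(Var e' * Var a - Var e' * Var b) * Var e \<in> (var_ideal S :: ('a, 'k) mpoly set)"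
    using I_L_mem_var_ideal[OF diamond_binomial_mem_I_L[OF d]] by simp
  then have "Var e' * Var a - Var e' * Var b \<in> (var_ideal T :: ('a, 'k) mpoly set)"
    unfolding mem_var_ideal_colonD[OF colon] .
  moreover have "\<not> (inf e' b = inf e' a \<and> sup e' b = sup e' a)"
    using e l ne by (auto simp: e'_def inf_absorb1 inf_absorb2 sup_absorb1 sup_absorb2)
  ultimately obtain w where "w \<in> T" "inf e' a \<le> w" "w \<le> sup e' a"
    using Var_mult_Var_diff_mem_var_ideal by blast
  moreover have "p \<le> inf e' a" "sup e' a \<le> q"
    using e l by (auto simp: e'_def)
  ultimately have "w \<in> T \<inter> {p..q}"
    by (simp add: order.trans[of p "inf e' a" w] order.trans[of w "sup e' a" q])
  then show ?thesis by blast
qed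

lemma colon_var_ideal_relative_complements:
  assumes colon: "colon (var_ideal S) (var_ideal (insert e S)) = (var_ideal T :: ('a::lattice, 'k::comm_ring_1) mpoly set)"
    and uv: "u \<noteq> v" "inf e u = p" "sup e u = q" "inf e v = p" "sup e v = q"
    and "e \<noteq> p" "e \<noteq> q"
  shows "u \<in> T"
proof -
  have "basic_binomial e u - basic_binomial e v \<in> (I_L :: ('a, 'k) mpoly set)"
    using relative_complements_incomparable[OF uv(2,3)] relative_complements_incomparable[OF uv(4,5)]
      \<open>e \<noteq> p\<close> \<open>e \<noteq> q\<close>
    unfolding I_L_def by (intro ideal_gen_diff) (simp_all add: basic_binomial_mem_I_L[unfolded I_L_def])
  moreover have "basic_binomial e u - basic_binomial e v = ((Var u - Var v) * Var e :: ('a, 'k) mpoly)"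
    unfolding basic_binomial_def using uv by (simp add: algebra_simps)
  ultimately have "Var u - Var v \<in> (var_ideal T :: ('a, 'k) mpoly set)"
    unfolding mem_var_ideal_colonD[OF colon] by (simp add: I_L_mem_var_ideal)
  then show "u \<in> T" using uv(1) by (rule Var_diff_mem_var_ideal)
qed

text \<open>The colon ideal has no variable in \<open>{p..q}\<close>, since a variable \<open>w\<close> of it satisfies
  \<open>Var w * Var e \<in> var_ideal S\<close>, which forces \<open>S\<close> to meet the interval between \<open>inf w e\<close> and
  \<open>sup w e\<close>. Yet for an endpoint \<open>e\<close> the binomial of the diamond, and for an interior \<open>e\<close> two
  relative complements of \<open>e\<close>, produce such a variable.\<close>

lemma colon_var_ideal_diamond:
  assumes d: "diamond p a b c q"
    and compl: "\<forall>e. p < e \<and> e < q \<longrightarrow>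
      (\<exists>u v. u \<noteq> v \<and> inf e u = p \<and> sup e u = q \<and> inf e v = p \<and> sup e v = q)"
    and S: "S \<inter> {p..q} = {}" and e: "e \<in> {p..q}"
  shows "colon (var_ideal S) (var_ideal (insert e S)) \<noteq> (var_ideal T :: ('a::lattice, 'k::comm_ring_1) mpoly set)"
proof
  assume colon: "colon (var_ideal S) (var_ideal (insert e S)) = (var_ideal T :: ('a, 'k) mpoly set)"
  have T: "T \<inter> {p..q} = {}" by (rule colon_var_ideal_interval_disjoint[OF colon S e])
  consider "e = p \<or> e = q" | "p < e" "e < q"
    using e by (auto simp: le_less)
  then show False
  proof cases
    case 1
    with colon_var_ideal_diamond_endpoint[OF colon d] T show False by blast
  next
    case 2
    then obtain u v where uv: "u \<noteq> v" "inf e u = p" "sup e u = q" "inf e v = p" "sup e v = q"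
      using compl by blast
    with 2 have "u \<in> T" by (intro colon_var_ideal_relative_complements[OF colon]) auto
    moreover have "u \<in> {p..q}" using uv(2,3) by (auto simp flip: uv(2,3))
    ultimately show False using T by blast
  qed
qed


text \<open>In a combinatorial Koszul filtration, take an ideal with the fewest variables among those
  having a variable in \<open>D\<close>. The ideal \<open>J\<close> below it has no variable in \<open>D\<close>, and being cyclic over
  \<open>J\<close> it has exactly one variable more.\<close>

lemma combinatorial_koszul_filtration_var_ideal:
  assumes "combinatorial_koszul_filtration_H F" "I \<in> F"
  shows "I = var_ideal {u. Var u \<in> I}"
proof -
  from assms obtain S where "I = var_ideal S"
    unfolding combinatorial_koszul_filtration_H_def by blast
  moreover from this have "{u. Var u \<in> I} = S" by (simp add: Var_mem_var_ideal_iff)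
  ultimately show ?thesis by simp
qed

lemma combinatorial_koszul_filtration_crossing:
  fixes F :: "('a::{finite,lattice}, 'k::field) mpoly set set"
  assumes F: "combinatorial_koszul_filtration_H F" and "x \<in> D"
  obtains S e T where "S \<inter> D = {}" "e \<in> D"
    "colon (var_ideal S) (var_ideal (insert e S)) = (var_ideal T :: ('a, 'k) mpoly set)"
proof -
  define vars where "vars I = {u. Var u \<in> I}" for I :: "('a, 'k) mpoly set"
  have vars_var_ideal: "vars (var_ideal S) = S" for S
    by (simp add: vars_def Var_mem_var_ideal_iff)
  have F_var_ideal: "I = var_ideal (vars I)" if "I \<in> F" for I
    unfolding vars_def using F that by (rule combinatorial_koszul_filtration_var_ideal)
  have top: "var_ideal UNIV \<in> F"
    and step: "\<And>I. I \<in> F \<Longrightarrow> I \<noteq> I_L \<Longrightarrow>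
      \<exists>J\<in>F. J \<subset> I \<and> (\<exists>f. I = ideal_gen (J \<union> {f})) \<and> colon J I \<in> F"
    using F unfolding combinatorial_koszul_filtration_H_def koszul_filtration_H_def by blast+
  define P where "P I \<longleftrightarrow> I \<in> F \<and> vars I \<inter> D \<noteq> {}" for I
  have "P (var_ideal UNIV)"
    using top \<open>x \<in> D\<close> by (auto simp: P_def vars_var_ideal)
  then obtain I where I: "I \<in> F" "vars I \<inter> D \<noteq> {}"
    and least: "\<forall>I'. P I' \<longrightarrow> card (vars I) \<le> card (vars I')"
    using ex_has_least_nat[of P _ "\<lambda>I. card (vars I)"] unfolding P_def by blast
  have "I \<noteq> I_L"
    using I(2) vars_var_ideal[of "{}"] by (auto simp: var_ideal_empty)
  with I(1) step obtain J f where J: "J \<in> F" "J \<subset> I" and cyclic: "I = ideal_gen (J \<union> {f})"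
    and colon: "colon J I \<in> F"
    by blast
  define S where "S = vars J"
  have J_eq: "J = var_ideal S" and I_eq: "I = var_ideal (vars I)"
    using F_var_ideal J(1) I(1) by (auto simp: S_def)
  have "S \<subset> vars I"
    using J(2) J_eq I_eq var_ideal_mono[of S "vars I"] unfolding S_def vars_def by auto
  then have "card S < card (vars I)" by (rule psubset_card_mono[OF finite])
  with least J(1) have S_D: "S \<inter> D = {}"
    unfolding P_def S_def by fastforce
  from I(2) obtain e where e: "e \<in> vars I" "e \<in> D" by blast
  with S_D have "e \<notin> S" by blast
  have "var_ideal (vars I) = ideal_gen (var_ideal S \<union> {f})"
    using cyclic J_eq I_eq by simp
  from var_ideal_cyclic_extension[OF this psubset_imp_subset[OF \<open>S \<subset> vars I\<close>] e(1) \<open>e \<notin> S\<close>]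
  have "vars I = insert e S" .
  then have "colon (var_ideal S) (var_ideal (insert e S)) = (var_ideal (vars (colon J I)) :: ('a, 'k) mpoly set)"
    using F_var_ideal[OF colon] J_eq I_eq by simp
  with S_D e(2) show ?thesis by (rule that)
qed

theorem combinatorial_koszul_filtration_imp_distrib:
  fixes F :: "('a::{finite,lattice}, 'k::field) mpoly set set"
  assumes M: "modular_lattice TYPE('a)" and F: "combinatorial_koszul_filtration_H F"
  shows "class.distrib_lattice (inf :: 'a \<Rightarrow> 'a \<Rightarrow> 'a) (\<le>) (<) sup"
proof (rule ccontr)
  assume "\<not> ?thesis"
  with M obtain p a b c q :: 'a where d: "diamond p a b c q"
    and compl: "\<forall>e. p < e \<and> e < q \<longrightarrow>
      (\<exists>u v. u \<noteq> v \<and> inf e u = p \<and> sup e u = q \<and> inf e v = p \<and> sup e v = q)"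
    by (rule nondistrib_modular_diamond_relative_complements)
  have "p \<in> {p..q}" using diamond_le(7)[OF d] by simp
  with F obtain S e T where "S \<inter> {p..q} = {}" "e \<in> {p..q}"
    "colon (var_ideal S) (var_ideal (insert e S)) = (var_ideal T :: ('a, 'k) mpoly set)"
    by (rule combinatorial_koszul_filtration_crossing)
  with colon_var_ideal_diamond[OF d compl] show False by blast
qed

theorem theorem2p4:
  assumes "modular_lattice TYPE('a::{finite, lattice})"
  shows "class.distrib_lattice (inf :: 'a \<Rightarrow> 'a \<Rightarrow> 'a) (\<le>) (<) sup \<longleftrightarrow>
         (\<exists>F :: ('a, 'k::field) mpoly set set. combinatorial_koszul_filtration_H F)"
  using distrib_combinatorial_koszul_filtration[OF _ refl]
    combinatorial_koszul_filtration_imp_distrib[OF assms] by blast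

end
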